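(* In the asymmetric regime $\lambda_+>\lambda_-$, let $t_G<t\le\infty$. Then $g_-:=g(-1)>0$, and for every $0<r<\infty$ there exists a finite $A=A(\lambda_+,\lambda_-,r)$ such that for every ball $B=B_r(x)$, every bounded measurable $\Lambda\supset B$, every $\hat{\boldsymbol\omega}$ and every $f\in\mathcal F^b_B$, $$\sup_{\boldsymbol\omega^1,\boldsymbol\omega^2}\big|\gamma^\infty_B(f\mid\hat{\boldsymbol\omega}_{\Lambda\setminus B}\boldsymbol\omega^1_{\Lambda^c})-\gamma^\infty_B(f\mid\hat{\boldsymbol\omega}_{\Lambda\setminus B}\boldsymbol\omega^2_{\Lambda^c})\big|\le A\|f\|e^{-g_-d(B,\Lambda^c)/(2a)},$$ where $\gamma^\infty$ is defined with time parameter $t$ and $d(B,\Lambda^c)=\inf_{y\in B,z\in\Lambda^c}|y-z|$.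
   Context: Fix $d\ge2$, $a>0$, $\lambda_+>\lambda_->0$, $\alpha=\lambda_+/\lambda_-$, $t_G=\frac12\log\frac{\lambda_++\lambda_-}{\lambda_+-\lambda_-}$. Colored configurations $\hat{\boldsymbol\omega}$ are pairs of disjoint locally finite subsets of $\mathbb R^d$ (colors $\hat\sigma_x\in\{+,-\}$, grey configuration $\omega$); $\mathcal F^b_B$ are bounded measurable functions of the colored configuration in $B$; $\|f\|$ sup norm. $p_t(+,+)=p_t(-,-)=\frac12(1+e^{-2t})$, $p_t(+,-)=p_t(-,+)=\frac12(1-e^{-2t})$ ($\equiv\frac12$ at $t=\infty$). Magnetization $m(\hat{\boldsymbol\omega}_D)=|\omega_D|^{-1}\sum_{x\in\omega_D}\hat\sigma_x$; $g(m)=\log\alpha+m\log\frac{1+e^{-2t}}{1-e^{-2t}}$ (second term $0$ for $t=\infty$); $\rho(\hat{\boldsymbol\omega}_D)=\exp(-|\omega_D|g(m(\hat{\boldsymbol\omega}_D)))$. Points at distance $<2a$ are connected; clusters are connected components. For bounded $\Lambda$, grey $\omega_\Lambda$ and boundary $\hat{\boldsymbol\omega}_{\Lambda^c}$: $\mathcal C_\Lambda(\omega_\Lambda)$ = clusters of $\omega_\Lambda\cup\omega_{\Lambda^c}$ not contained in $\bar\Lambda^c$ ($\bar\Lambda$ the $2a$-neighbourhood of $\Lambda$), $\mathcal C^\infty_\Lambda,\mathcal C^f_\Lambda$ its infinite/finite members; $|\hat\sigma_D|^\pm$ counts $\pm$ colors. $P^-_\Lambda$: Poisson process of grey points in $\Lambda$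 of intensity $\lambda_-$. $\gamma^\infty_\Lambda(f\mid\hat{\boldsymbol\omega}_{\Lambda^c})=\frac{\int P^-_\Lambda(d\omega_\Lambda)f^\infty(\omega_\Lambda)W(\omega_\Lambda)}{\int P^-_\Lambda(d\omega_\Lambda)W(\omega_\Lambda)}$ with $W=\prod_{C\in\mathcal C^f_\Lambda}(\alpha^{|C\cap\Lambda|}+\rho(\hat{\boldsymbol\omega}_{C\setminus\Lambda}))\prod_{C\in\mathcal C^\infty_\Lambda}\alpha^{|C\cap\Lambda|}$, $f^\infty(\omega_\Lambda)=\sum_{\hat\sigma}f(\omega_\Lambda,\hat\sigma)\nu^\infty_\Lambda(\hat\sigma)$ and $\nu^\infty_\Lambda(\hat\sigma)=\prod_{C\in\mathcal C^\infty_\Lambda}p_t(+,+)^{|\hat\sigma_{C\cap\Lambda}|^+}p_t(+,-)^{|\hat\sigma_{C\cap\Lambda}|^-}\prod_{C\in\mathcal C^f_\Lambda}\frac{\alpha^{|C\cap\Lambda|}p_t(+,+)^{|\hat\sigma_{C\cap\Lambda}|^+}p_t(+,-)^{|\hat\sigma_{C\cap\Lambda}|^-}+p_t(-,+)^{|\hat\sigma_{C\cap\Lambda}|^+}p_t(-,-)^{|\hat\sigma_{C\cap\Lambda}|^-}\rho(\hat{\boldsymbol\omega}_{C\setminus\Lambda})}{\alpha^{|C\cap\Lambda|}+\rho(\hat{\boldsymbol\omega}_{C\setminus\Lambda})}$. *)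

theory Defs
  imports "HOL-Analysis.Analysis" "HOL-Library.Extended_Real"
begin


type_synonym 'd pt = "real^'d"
text \<open>Colored configuration: (set of plus-points, set of minus-points).\<close>
type_synonym 'd ccfg = "'d pt set \<times> 'd pt set"

definition grey :: "('d::finite) ccfg \<Rightarrow> ('d::finite) pt set" where
  "grey w = fst w \<union> snd w"

definition restr :: "('d::finite) ccfg \<Rightarrow> ('d::finite) pt set \<Rightarrow> ('d::finite) ccfg" where
  "restr w D = (fst w \<inter> D, snd w \<inter> D)"

definition cat :: "('d::finite) ccfg \<Rightarrow> ('d::finite) ccfg \<Rightarrow> ('d::finite) ccfg" where
  "cat w1 w2 = (fst w1 \<union> fst w2, snd w1 \<union> snd w2)"

definition locfin :: "('d::finite) pt set \<Rightarrow> bool" where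
  "locfin S \<longleftrightarrow> (\<forall>K. bounded K \<longrightarrow> finite (S \<inter> K))"

definition ccfgs :: "('d::finite) ccfg set" where
  "ccfgs = {w. fst w \<inter> snd w = {} \<and> locfin (grey w)}"

definition qexp :: "ereal \<Rightarrow> real" where
  "qexp t = (if t = \<infinity> then 0 else exp (-2 * real_of_ereal t))"

text \<open>Transition probabilities p_t(s,s'); True encodes +, False encodes -.\<close>
definition ptr :: "ereal \<Rightarrow> bool \<Rightarrow> bool \<Rightarrow> real" where
  "ptr t s s' = (if t = \<infinity> then 1/2
                 else if s = s' then (1 + qexp t) / 2 else (1 - qexp t) / 2)"

definition tG :: "real \<Rightarrow> real \<Rightarrow> real" where
  "tG lp lm = 1/2 * ln ((lp + lm) / (lp - lm))"

definition gfun :: "real \<Rightarrow> real \<Rightarrow> ereal \<Rightarrow> real \<Rightarrow> real" where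
  "gfun lp lm t m = ln (lp / lm) +
     (if t = \<infinity> then 0 else m * ln ((1 + qexp t) / (1 - qexp t)))"

definition magn :: "('d::finite) ccfg \<Rightarrow> real" where
  "magn w = (\<Sum>x\<in>grey w. if x \<in> fst w then 1 else -1) / real (card (grey w))"

definition rho :: "real \<Rightarrow> real \<Rightarrow> ereal \<Rightarrow> ('d::finite) ccfg \<Rightarrow> real" where
  "rho lp lm t w = exp (- real (card (grey w)) * gfun lp lm t (magn w))"

definition linked :: "real \<Rightarrow> ('d::finite) pt set \<Rightarrow> (('d::finite) pt \<times> ('d::finite) pt) set" where
  "linked a \<omega> = {(x, y). x \<in> \<omega> \<and> y \<in> \<omega> \<and> dist x y < 2 * a}"

definition cluster :: "real \<Rightarrow> ('d::finite) pt set \<Rightarrow> ('d::finite) pt \<Rightarrow> ('d::finite) pt set" where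
  "cluster a \<omega> x = {y. (x, y) \<in> (linked a \<omega>)\<^sup>*}"

definition clusters :: "real \<Rightarrow> ('d::finite) pt set \<Rightarrow> ('d::finite) pt set set" where
  "clusters a \<omega> = {cluster a \<omega> x | x. x \<in> \<omega>}"

definition nbhd :: "real \<Rightarrow> ('d::finite) pt set \<Rightarrow> ('d::finite) pt set" where
  "nbhd a L = {x. \<exists>y\<in>L. dist x y < 2 * a}"

text \<open>C_Lambda(omega_Lambda) for boundary condition eta (only eta outside Lambda is used).\<close>
definition CL :: "real \<Rightarrow> ('d::finite) pt set \<Rightarrow> ('d::finite) ccfg \<Rightarrow> ('d::finite) pt set \<Rightarrow> ('d::finite) pt set set" where
  "CL a L eta \<omega>L = {C \<in> clusters a (\<omega>L \<union> grey (restr eta (- L))). \<not> C \<subseteq> - nbhd a L}"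

definition Wt :: "real \<Rightarrow> real \<Rightarrow> real \<Rightarrow> ereal \<Rightarrow> ('d::finite) pt set \<Rightarrow> ('d::finite) ccfg \<Rightarrow> ('d::finite) pt set \<Rightarrow> real" where
  "Wt a lp lm t L eta \<omega>L =
     (\<Prod>C\<in>{C \<in> CL a L eta \<omega>L. finite C}.
         (lp / lm) ^ card (C \<inter> L) + rho lp lm t (restr eta (C - L))) *
     (\<Prod>C\<in>{C \<in> CL a L eta \<omega>L. infinite C}. (lp / lm) ^ card (C \<inter> L))"

text \<open>nu^infinity_Lambda of the coloring of omega_Lambda whose plus-points form the set S.\<close>
definition nuinf :: "real \<Rightarrow> real \<Rightarrow> real \<Rightarrow> ereal \<Rightarrow> ('d::finite) pt set \<Rightarrow> ('d::finite) ccfg \<Rightarrow> ('d::finite) pt set \<Rightarrow> ('d::finite) pt set \<Rightarrow> real" where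
  "nuinf a lp lm t L eta \<omega>L S =
     (\<Prod>C\<in>{C \<in> CL a L eta \<omega>L. infinite C}.
         ptr t True True ^ card (S \<inter> (C \<inter> L)) * ptr t True False ^ card ((C \<inter> L) - S)) *
     (\<Prod>C\<in>{C \<in> CL a L eta \<omega>L. finite C}.
         ((lp / lm) ^ card (C \<inter> L) * ptr t True True ^ card (S \<inter> (C \<inter> L))
             * ptr t True False ^ card ((C \<inter> L) - S)
          + ptr t False True ^ card (S \<inter> (C \<inter> L)) * ptr t False False ^ card ((C \<inter> L) - S)
             * rho lp lm t (restr eta (C - L)))
         / ((lp / lm) ^ card (C \<inter> L) + rho lp lm t (restr eta (C - L))))"

definition finf :: "real \<Rightarrow> real \<Rightarrow> real \<Rightarrow> ereal \<Rightarrow> ('d::finite) pt set \<Rightarrow> ('d::finite) ccfg \<Rightarrow> (('d::finite) ccfg \<Rightarrow> real) \<Rightarrow> ('d::finite) pt set \<Rightarrow> real" where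
  "finf a lp lm t L eta f \<omega>L = (\<Sum>S\<in>Pow \<omega>L. f (S, \<omega>L - S) * nuinf a lp lm t L eta \<omega>L S)"

text \<open>Integral against the Poisson point process of intensity lam in the bounded set L,
  written out via its standard density representation.\<close>
definition poisson_int :: "real \<Rightarrow> ('d::finite) pt set \<Rightarrow> (('d::finite) pt set \<Rightarrow> real) \<Rightarrow> real" where
  "poisson_int lam L F =
     (\<Sum>n. exp (- lam * measure lebesgue L) * lam ^ n / fact n *
        (\<integral>x. F (x ` {..<n}) \<partial>(Pi\<^sub>M {..<n} (\<lambda>_. lebesgue_on L))))"

definition gamma_inf :: "real \<Rightarrow> real \<Rightarrow> real \<Rightarrow> ereal \<Rightarrow> ('d::finite) pt set \<Rightarrow> (('d::finite) ccfg \<Rightarrow> real) \<Rightarrow> ('d::finite) ccfg \<Rightarrow> real" where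
  "gamma_inf a lp lm t L f eta =
     poisson_int lm L (\<lambda>\<omega>L. finf a lp lm t L eta f \<omega>L * Wt a lp lm t L eta \<omega>L)
     / poisson_int lm L (\<lambda>\<omega>L. Wt a lp lm t L eta \<omega>L)"

definition cfg_measurable :: "(('d::finite) ccfg \<Rightarrow> real) \<Rightarrow> bool" where
  "cfg_measurable f \<longleftrightarrow> (\<forall>n (s :: nat \<Rightarrow> bool).
     (\<lambda>x. f (x ` {i \<in> {..<n}. s i}, x ` {i \<in> {..<n}. \<not> s i}))
       \<in> borel_measurable (Pi\<^sub>M {..<n} (\<lambda>_. (lborel :: ('d::finite) pt measure))))"

definition Fb :: "('d::finite) pt set \<Rightarrow> (('d::finite) ccfg \<Rightarrow> real) set" where
  "Fb B = {f. (\<forall>w. f w = f (restr w B)) \<and> bounded (f ` ccfgs) \<and> cfg_measurable f}"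

definition supnorm :: "(('d::finite) ccfg \<Rightarrow> real) \<Rightarrow> real" where
  "supnorm f = (SUP w\<in>(ccfgs :: ('d::finite) ccfg set). \<bar>f w\<bar>)"

end

theory Submission
  imports Defs
begin

text \<open>The weight \<open>W \<cdot> \<nu>\<^sup>\<infinity>\<close> of a configuration in \<open>B\<close> factorises over the clusters meeting the
  \<open>2a\<close>-neighbourhood of \<open>B\<close>. Clusters that stay \<open>2a\<close>-away from \<open>\<Lambda>\<^sup>c\<close> do not see the outer
  boundary condition. Every other cluster reaches from \<open>B\<close> to \<open>\<Lambda>\<^sup>c\<close>; if it is finite it has more
  than \<open>d(B, \<Lambda>\<^sup>c)/(2a) - 3\<close> points outside \<open>B\<close>, so its \<open>-\<close> weight \<open>\<rho>\<close> is at most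
  \<open>\<kappa> = exp (3g\<^sub>- - g\<^sub>- d(B, \<Lambda>\<^sup>c)/(2a))\<close>. Since \<open>t > t\<^sub>G\<close> means \<open>p\<^sub>t(-,\<cdot>) \<le> \<alpha> p\<^sub>t(+,\<cdot>)\<close>, the weight
  of such a cluster is then within a factor \<open>1 + \<kappa>\<close> of its \<open>+\<close> part, which does not depend on the
  boundary condition, and by packing there are at most \<open>P(a, r, d)\<close> such clusters. So the
  numerator (with \<open>f\<close> shifted by \<open>\<parallel>f\<parallel>\<close>) and the denominator of \<open>\<gamma>\<^sup>\<infinity>\<^sub>B\<close> are, pointwise and after
  Poisson integration, within a factor \<open>(1 + \<kappa>)\<^sup>P\<close> of boundary-independent quantities, and two
  boundary conditions change \<open>\<gamma>\<^sup>\<infinity>\<^sub>B(f)\<close> by at most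
  \<open>2\<parallel>f\<parallel>((1 + \<kappa>)\<^bsup>2P\<^esup> - 1) = O(\<parallel>f\<parallel> exp (-g\<^sub>- d(B, \<Lambda>\<^sup>c)/(2a)))\<close>.\<close>

section \<open>The asymmetric regime\<close>

lemma magn_bounds: "-1 \<le> magn w \<and> magn w \<le> 1"
proof (cases "finite (grey w) \<and> grey w \<noteq> {}")
  case True
  let ?s = "(\<Sum>x\<in>grey w. if x \<in> fst w then 1 else -1 :: real)"
  have "\<bar>?s\<bar> \<le> (\<Sum>x\<in>grey w. \<bar>if x \<in> fst w then 1 else -1 :: real\<bar>)" by (rule sum_abs)
  also have "\<dots> = (\<Sum>x\<in>grey w. 1)" by (intro sum.cong) auto
  also have "\<dots> = real (card (grey w))" by simp
  finally have "\<bar>?s\<bar> \<le> real (card (grey w))" .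
  moreover have "card (grey w) > 0" using True by (simp add: card_gt_0_iff)
  ultimately show ?thesis unfolding magn_def by (auto simp: divide_le_eq le_divide_eq abs_le_iff)
next
  case False
  then show ?thesis by (auto simp: magn_def)
qed

locale asymmetric_regime =
  fixes lp lm :: real and t :: ereal
  assumes lm_less_lp: "lm < lp" and lm_pos: "0 < lm"
    and tG_less: "ereal (tG lp lm) < t"
begin

definition alpha :: real where "alpha = lp / lm"

definition g_minus :: real where "g_minus = gfun lp lm t (-1)"

lemma alpha_gt_1: "1 < alpha"
  using lm_less_lp lm_pos by (simp add: alpha_def)

lemma qexp_less_threshold:
  assumes "t \<noteq> \<infinity>"
  shows "qexp t < (lp - lm) / (lp + lm)"
proof -
  obtain u where u: "t = ereal u" using assms tG_less by (cases t) auto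
  have "exp ((-2) * tG lp lm) = (lp - lm) / (lp + lm)"
  proof -
    have "(-2) * tG lp lm = ln (inverse ((lp + lm) / (lp - lm)))"
      unfolding tG_def using lm_less_lp lm_pos by (simp add: ln_div)
    then show ?thesis using lm_less_lp lm_pos by simp
  qed
  moreover have "exp ((-2) * u) < exp ((-2) * tG lp lm)"
    using tG_less u by simp
  ultimately show ?thesis using u by (simp add: qexp_def)
qed

lemma qexp_nonneg: "0 \<le> qexp t"
  by (simp add: qexp_def)

lemma qexp_less_1: "qexp t < 1"
proof (cases "t = \<infinity>")
  case False
  have "(lp - lm) / (lp + lm) < 1" using lm_less_lp lm_pos by simp
  then show ?thesis using qexp_less_threshold[OF False] by linarith
qed (simp add: qexp_def)

text \<open>This is where \<open>t > t\<^sub>G\<close> enters: it says exactly that the odds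
  \<open>p\<^sub>t(+,+) / p\<^sub>t(+,-)\<close> are smaller than \<open>\<alpha>\<close>.\<close>
lemma flip_odds_less_alpha:
  assumes "t \<noteq> \<infinity>"
  shows "(1 + qexp t) / (1 - qexp t) < alpha"
proof -
  have "qexp t * (lp + lm) < lp - lm"
    using qexp_less_threshold[OF assms] lm_less_lp lm_pos by (simp add: field_simps)
  then show ?thesis
    using qexp_less_1 lm_pos by (simp add: alpha_def field_simps)
qed

lemma g_minus_pos: "0 < g_minus"
proof (cases "t = \<infinity>")
  case True
  then show ?thesis
    using alpha_gt_1 unfolding g_minus_def gfun_def alpha_def[symmetric] by simp
next
  case False
  have "0 < (1 + qexp t) / (1 - qexp t)"
    using qexp_nonneg qexp_less_1 by simp
  then have "ln ((1 + qexp t) / (1 - qexp t)) < ln alpha"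
    using flip_odds_less_alpha[OF False] by simp
  then show ?thesis using False by (simp add: g_minus_def gfun_def flip: alpha_def)
qed

lemma g_minus_le_gfun:
  assumes "-1 \<le> m" "m \<le> 1"
  shows "g_minus \<le> gfun lp lm t m"
proof -
  have "0 \<le> ln ((1 + qexp t) / (1 - qexp t))"
    using qexp_nonneg qexp_less_1 by simp
  then have "- ln ((1 + qexp t) / (1 - qexp t)) \<le> m * ln ((1 + qexp t) / (1 - qexp t))"
    using assms mult_right_mono[of "-1" m] by simp
  then show ?thesis by (simp add: g_minus_def gfun_def)
qed

lemma ptr_pos: "0 < ptr t s s'"
  using qexp_less_1 qexp_nonneg by (auto simp: ptr_def)

lemma ptr_sum_eq_1: "ptr t s True + ptr t s False = 1"
  by (cases s) (auto simp: ptr_def field_simps)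

lemma ptr_minus_le: "ptr t False s \<le> alpha * ptr t True s"
proof (cases "t = \<infinity>")
  case True
  then show ?thesis using alpha_gt_1 by (simp add: ptr_def)
next
  case t: False
  show ?thesis
  proof (cases s)
    case True
    have "(1 - qexp t) / 2 \<le> 1 * ((1 + qexp t) / 2)" using qexp_nonneg by simp
    also have "\<dots> \<le> alpha * ((1 + qexp t) / 2)"
      using alpha_gt_1 qexp_nonneg by (intro mult_right_mono) auto
    finally show ?thesis using True t by (simp add: ptr_def)
  next
    case False
    have "1 + qexp t \<le> alpha * (1 - qexp t)"
      using flip_odds_less_alpha[OF t] qexp_less_1 by (simp add: field_simps)
    then show ?thesis using False t by (simp add: ptr_def)
  qed
qed

lemma rho_pos [simp]: "0 < rho lp lm t w"
  by (simp add: rho_def)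

lemma rho_nonneg [simp]: "0 \<le> rho lp lm t w"
  by (simp add: rho_def)

lemma rho_le_exp_g_minus: "rho lp lm t w \<le> exp (- real (card (grey w)) * g_minus)"
proof -
  have "real (card (grey w)) * g_minus \<le> real (card (grey w)) * gfun lp lm t (magn w)"
    using g_minus_le_gfun[of "magn w"] magn_bounds[of w] by (intro mult_left_mono) auto
  then show ?thesis by (simp add: rho_def)
qed

lemma rho_le_1: "rho lp lm t w \<le> 1"
proof -
  have "exp (- real (card (grey w)) * g_minus) \<le> 1" using g_minus_pos by simp
  then show ?thesis using rho_le_exp_g_minus[of w] by linarith
qed

end

section \<open>Clusters\<close>

lemma linked_sym: "(u, v) \<in> linked a V \<Longrightarrow> (v, u) \<in> linked a V"
  by (auto simp: linked_def dist_commute)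

lemma linkedD: "(u, v) \<in> linked a V \<Longrightarrow> u \<in> V \<and> v \<in> V \<and> dist u v < 2 * a"
  by (auto simp: linked_def)

lemma linked_mono: "V \<subseteq> V' \<Longrightarrow> linked a V \<subseteq> linked a V'"
  by (auto simp: linked_def)

lemma rtrancl_linked_sym: "(u, v) \<in> (linked a V)\<^sup>* \<Longrightarrow> (v, u) \<in> (linked a V)\<^sup>*"
  by (induction rule: rtrancl_induct) (auto intro: converse_rtrancl_into_rtrancl linked_sym)

lemma cluster_self: "x \<in> cluster a V x"
  by (simp add: cluster_def)

lemma cluster_linked_step: "y \<in> cluster a V x \<Longrightarrow> (y, z) \<in> linked a V \<Longrightarrow> z \<in> cluster a V x"
  unfolding cluster_def by (auto intro: rtrancl_into_rtrancl)

lemma cluster_subsetI: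
  assumes "x \<in> S" and "\<And>y z. y \<in> S \<Longrightarrow> (y, z) \<in> linked a V \<Longrightarrow> z \<in> S"
  shows "cluster a V x \<subseteq> S"
proof
  fix y assume "y \<in> cluster a V x"
  then have "(x, y) \<in> (linked a V)\<^sup>*" by (simp add: cluster_def)
  then show "y \<in> S" by (induction rule: rtrancl_induct) (use assms in auto)
qed

lemma cluster_subset: "x \<in> V \<Longrightarrow> cluster a V x \<subseteq> V"
  by (rule cluster_subsetI) (auto dest: linkedD)

lemma cluster_eq: "y \<in> cluster a V x \<Longrightarrow> cluster a V y = cluster a V x"
proof -
  assume "y \<in> cluster a V x"
  then have "(x, y) \<in> (linked a V)\<^sup>*" "(y, x) \<in> (linked a V)\<^sup>*"
    by (auto simp: cluster_def intro: rtrancl_linked_sym)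
  then show ?thesis unfolding cluster_def by (blast intro: rtrancl_trans)
qed

lemma cluster_mono: "V \<subseteq> V' \<Longrightarrow> cluster a V x \<subseteq> cluster a V' x"
  unfolding cluster_def using rtrancl_mono[OF linked_mono] by blast

lemma cluster_in_clusters: "z \<in> V \<Longrightarrow> cluster a V z \<in> clusters a V"
  by (auto simp: clusters_def)

lemma clusters_eq_cluster: "C \<in> clusters a V \<Longrightarrow> z \<in> C \<Longrightarrow> C = cluster a V z"
  by (auto simp: clusters_def dest: cluster_eq)

lemma clusters_subset: "C \<in> clusters a V \<Longrightarrow> C \<subseteq> V"
  by (auto simp: clusters_def dest: cluster_subset)

lemma clusters_eqI: "C \<in> clusters a V \<Longrightarrow> D \<in> clusters a V \<Longrightarrow> z \<in> C \<Longrightarrow> z \<in> D \<Longrightarrow> C = D"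
  using clusters_eq_cluster by metis

lemma clusters_dist_ge:
  assumes "C \<in> clusters a V" "D \<in> clusters a V" "C \<noteq> D" "u \<in> C" "v \<in> D"
  shows "2 * a \<le> dist u v"
proof (rule ccontr)
  assume "\<not> 2 * a \<le> dist u v"
  moreover have "u \<in> V" "v \<in> V" using assms clusters_subset by blast+
  ultimately have "(u, v) \<in> linked a V" by (auto simp: linked_def)
  then have "v \<in> C"
    using cluster_linked_step[OF cluster_self] clusters_eq_cluster[OF assms(1,4)] by blast
  then show False using clusters_eqI assms by blast
qed

lemma cluster_image:
  assumes bij: "bij_betw h V V'"
    and iso: "\<And>u v. u \<in> V \<Longrightarrow> v \<in> V \<Longrightarrow> dist (h u) (h v) < 2 * a \<longleftrightarrow> dist u v < 2 * a"
    and z: "z \<in> V"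
  shows "cluster a V' (h z) = h ` cluster a V z"
proof
  have hV: "h ` V = V'" using bij by (simp add: bij_betw_def)
  have "cluster a V z \<subseteq> {u \<in> V. h u \<in> cluster a V' (h z)}"
  proof (rule cluster_subsetI)
    fix y u assume y: "y \<in> {u \<in> V. h u \<in> cluster a V' (h z)}" and yu: "(y, u) \<in> linked a V"
    have "(h y, h u) \<in> linked a V'" using yu iso hV by (auto simp: linked_def)
    then show "u \<in> {u \<in> V. h u \<in> cluster a V' (h z)}" using y yu cluster_linked_step linkedD by fastforce
  qed (use z cluster_self in blast)
  then show "h ` cluster a V z \<subseteq> cluster a V' (h z)" by blast
  show "cluster a V' (h z) \<subseteq> h ` cluster a V z"
  proof (rule cluster_subsetI)
    fix y u assume y: "y \<in> h ` cluster a V z" and yu: "(y, u) \<in> linked a V'"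
    obtain y0 where y0: "y0 \<in> cluster a V z" "y = h y0" using y by blast
    have "y0 \<in> V" using y0 cluster_subset z by blast
    moreover obtain u0 where u0: "u0 \<in> V" "u = h u0" using yu linkedD hV by blast
    ultimately have "(y0, u0) \<in> linked a V" using yu y0 iso by (auto simp: linked_def)
    then show "u \<in> h ` cluster a V z" using cluster_linked_step y0 u0 by blast
  qed (use cluster_self in blast)
qed

lemma clusters_image:
  assumes "bij_betw h V V'"
    and "\<And>u v. u \<in> V \<Longrightarrow> v \<in> V \<Longrightarrow> dist (h u) (h v) < 2 * a \<longleftrightarrow> dist u v < 2 * a"
  shows "clusters a V' = (\<lambda>C. h ` C) ` clusters a V"
  using cluster_image[OF assms] bij_betw_imp_surj_on[OF assms(1)] by (auto simp: clusters_def)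

text \<open>Along a cluster one moves in steps shorter than \<open>2a\<close>, so the distance to \<open>B\<close>
  cannot jump over a layer of width \<open>2a\<close>.\<close>
lemma cluster_meets_layer:
  assumes C: "C \<in> clusters a V" and x: "x \<in> C" "infdist x B < s"
    and y: "y \<in> C" "s \<le> infdist y B"
  shows "\<exists>z\<in>C. s \<le> infdist z B \<and> infdist z B < s + 2 * a"
proof (rule ccontr)
  assume gap: "\<not> ?thesis"
  have "cluster a V x \<subseteq> {z \<in> C. infdist z B < s}"
  proof (rule cluster_subsetI)
    fix z u assume z: "z \<in> {z \<in> C. infdist z B < s}" and zu: "(z, u) \<in> linked a V"
    have "u \<in> C" using zu z cluster_linked_step clusters_eq_cluster[OF C x(1)] by auto
    moreover have "infdist u B < s + 2 * a"
      using infdist_triangle[of u B z] z linkedD[OF zu] by (simp add: dist_commute)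
    ultimately show "u \<in> {z \<in> C. infdist z B < s}" using gap by auto
  qed (use x in auto)
  then show False using y clusters_eq_cluster[OF C x(1)] by auto
qed

lemma inj_on_layers:
  assumes a: "0 < a" and z: "\<forall>j\<in>J. 2 * a * real j \<le> g (z j) \<and> g (z j) < 2 * a * real j + 2 * a"
  shows "inj_on z J"
proof (rule inj_onI)
  fix j k assume jk: "j \<in> J" "k \<in> J" "z j = z k"
  have "2 * a * real j \<le> g (z j)" "g (z j) < 2 * a * real j + 2 * a"
    "2 * a * real k \<le> g (z k)" "g (z k) < 2 * a * real k + 2 * a"
    using z jk(1,2) by auto
  then have "2 * a * real j < 2 * a * (real k + 1)" "2 * a * real k < 2 * a * (real j + 1)"
    unfolding distrib_left jk(3) by linarith+
  then have "real j < real k + 1" "real k < real j + 1"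
    using a by (simp_all only: mult_less_cancel_left_pos)
  then show "j = k" by linarith
qed

text \<open>A cluster that gets \<open>2a(N + 2)\<close>-far from \<open>B\<close> has a point outside \<open>B\<close> in each of the
  \<open>N + 1\<close> disjoint layers \<open>2aj \<le> infdist z B < 2a(j + 1)\<close>.\<close>
lemma infdist_cluster_less:
  assumes a: "0 < a" and C: "C \<in> clusters a V" and fin: "finite C"
    and x: "x \<in> C" "infdist x B < 2 * a" and y: "y \<in> C"
  shows "infdist y B < 2 * a * (real (card (C - B)) + 2)"
proof (rule ccontr)
  define N where "N = card (C - B) + 1"
  assume "\<not> ?thesis"
  then have y_far: "2 * a * (real N + 1) \<le> infdist y B" by (simp add: N_def algebra_simps)
  have "\<forall>j\<in>{1..N}. \<exists>z. z \<in> C \<and> 2 * a * real j \<le> infdist z B \<and> infdist z B < 2 * a * real j + 2 * a"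
  proof
    fix j assume j: "j \<in> {1..N}"
    have "2 * a * 1 \<le> 2 * a * real j" "2 * a * real j \<le> 2 * a * (real N + 1)"
      using j a by (intro mult_left_mono; simp)+
    then show "\<exists>z. z \<in> C \<and> 2 * a * real j \<le> infdist z B \<and> infdist z B < 2 * a * real j + 2 * a"
      using cluster_meets_layer[OF C x(1) _ y, where s = "2 * a * real j"] x(2) y_far by force
  qed
  then obtain z where z: "\<forall>j\<in>{1..N}. z j \<in> C \<and> 2 * a * real j \<le> infdist (z j) B
      \<and> infdist (z j) B < 2 * a * real j + 2 * a"
    by (metis (no_types) bchoice)
  have "inj_on z {1..N}"
    using z a by (intro inj_on_layers[where g = "\<lambda>u. infdist u B"]) auto
  moreover have "z ` {1..N} \<subseteq> C - B"
  proof
    fix u assume "u \<in> z ` {1..N}"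
    then obtain j where j: "j \<in> {1..N}" "u = z j" by auto
    have "0 < 2 * a * real j" "2 * a * real j \<le> infdist (z j) B" using j a z by auto
    then have "0 < infdist u B" unfolding j(2) by linarith
    then show "u \<in> C - B" using z j by auto
  qed
  ultimately have "card {1..N} \<le> card (C - B)"
    using card_inj_on_le fin by blast
  then show False by (simp add: N_def)
qed

lemma card_separated_subset_ball:
  fixes Q :: "'a::euclidean_space set"
  assumes "finite Q" and Q: "Q \<subseteq> ball c R" and a: "0 < a" and "0 \<le> R"
    and sep: "\<And>p q. p \<in> Q \<Longrightarrow> q \<in> Q \<Longrightarrow> p \<noteq> q \<Longrightarrow> 2 * a \<le> dist p q"
  shows "real (card Q) \<le> ((R + a) / a) ^ DIM('a)"
proof -
  define V where "V = unit_ball_vol (real DIM('a))"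
  have V: "0 < V" by (simp add: V_def)
  have ball_a: "emeasure lborel (ball q a) = ennreal (V * a ^ DIM('a))" for q :: 'a
    using emeasure_ball[of a q] a by (simp add: V_def)
  have ball_Ra: "emeasure lborel (ball c (R + a)) = ennreal (V * (R + a) ^ DIM('a))"
    using emeasure_ball[of "R + a" c] a \<open>0 \<le> R\<close> by (simp add: V_def)
  have "disjoint_family_on (\<lambda>q. ball q a) Q"
    unfolding disjoint_family_on_def
  proof (intro ballI impI)
    fix p q assume "p \<in> Q" "q \<in> Q" "p \<noteq> q"
    then show "ball p a \<inter> ball q a = {}"
      using sep[of p q] dist_triangle_less_add[of p _ a q a] by (force simp: dist_commute)
  qed
  then have "(\<Sum>q\<in>Q. emeasure lborel (ball q a)) = emeasure lborel (\<Union>q\<in>Q. ball q a)"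
    using \<open>finite Q\<close> by (intro sum_emeasure) auto
  also have "\<dots> \<le> emeasure lborel (ball c (R + a))"
  proof (rule emeasure_mono)
    show "(\<Union>q\<in>Q. ball q a) \<subseteq> ball c (R + a)"
    proof
      fix z assume "z \<in> (\<Union>q\<in>Q. ball q a)"
      then obtain q where "q \<in> Q" "dist z q < a" by (auto simp: dist_commute)
      moreover from this have "dist c q < R" using Q by auto
      ultimately show "z \<in> ball c (R + a)" using dist_triangle_less_add by simp
    qed
  qed simp
  finally have "(\<Sum>q\<in>Q. ennreal (V * a ^ DIM('a))) \<le> ennreal (V * (R + a) ^ DIM('a))"
    using ball_a ball_Ra by simp
  then have "ennreal (real (card Q) * (V * a ^ DIM('a))) \<le> ennreal (V * (R + a) ^ DIM('a))"
    by (simp add: ennreal_of_nat_eq_real_of_nat ennreal_mult' mult.commute)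
  then have "real (card Q) * (V * a ^ DIM('a)) \<le> V * (R + a) ^ DIM('a)"
    using V a \<open>0 \<le> R\<close> by (subst (asm) ennreal_le_iff) auto
  then show ?thesis
    using V a by (simp add: power_divide field_simps mult.left_commute)
qed

section \<open>Factorisation over clusters\<close>

lemma sum_Pow_Un:
  assumes "finite A" "finite R" "A \<inter> R = {}"
  shows "sum g (Pow (A \<union> R)) = (\<Sum>T\<in>Pow A. \<Sum>T'\<in>Pow R. g (T \<union> T'))"
proof -
  have "Pow (A \<union> R) = (\<lambda>(T, T'). T \<union> T') ` (Pow A \<times> Pow R)"
  proof
    show "Pow (A \<union> R) \<subseteq> (\<lambda>(T, T'). T \<union> T') ` (Pow A \<times> Pow R)"
    proof
      fix S assume "S \<in> Pow (A \<union> R)"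
      then have "S = (\<lambda>(T, T'). T \<union> T') (S \<inter> A, S \<inter> R)" "(S \<inter> A, S \<inter> R) \<in> Pow A \<times> Pow R" by auto
      then show "S \<in> (\<lambda>(T, T'). T \<union> T') ` (Pow A \<times> Pow R)" by blast
    qed
  qed auto
  moreover have "inj_on (\<lambda>(T, T'). T \<union> T') (Pow A \<times> Pow R)"
    by (rule inj_onI, clarsimp) (use assms(3) in blast)
  ultimately have "sum g (Pow (A \<union> R)) = sum (g \<circ> (\<lambda>(T, T'). T \<union> T')) (Pow A \<times> Pow R)"
    by (simp add: sum.reindex)
  then show ?thesis by (simp add: sum.cartesian_product case_prod_beta comp_def)
qed

lemma sum_Pow_UN_prod:
  fixes h :: "'c \<Rightarrow> 'a set \<Rightarrow> 'b::comm_semiring_1"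
  assumes "finite F" "\<And>C. C \<in> F \<Longrightarrow> finite (X C)"
    and "\<And>C D. C \<in> F \<Longrightarrow> D \<in> F \<Longrightarrow> C \<noteq> D \<Longrightarrow> X C \<inter> X D = {}"
  shows "(\<Sum>S\<in>Pow (\<Union>C\<in>F. X C). \<Prod>C\<in>F. h C (S \<inter> X C)) = (\<Prod>C\<in>F. \<Sum>T\<in>Pow (X C). h C T)"
  using assms
proof (induction F rule: finite_induct)
  case (insert C0 F)
  define R where "R = (\<Union>C\<in>F. X C)"
  have fin: "finite (X C0)" "finite R" using insert by (auto simp: R_def)
  have disj: "X C0 \<inter> R = {}" using insert by (fastforce simp: R_def)
  have "(\<Sum>S\<in>Pow (X C0 \<union> R). \<Prod>C\<in>insert C0 F. h C (S \<inter> X C))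
      = (\<Sum>T\<in>Pow (X C0). \<Sum>T'\<in>Pow R. \<Prod>C\<in>insert C0 F. h C ((T \<union> T') \<inter> X C))"
    by (rule sum_Pow_Un[OF fin disj])
  also have "\<dots> = (\<Sum>T\<in>Pow (X C0). \<Sum>T'\<in>Pow R. h C0 T * (\<Prod>C\<in>F. h C (T' \<inter> X C)))"
  proof (intro sum.cong refl)
    fix T T' assume T: "T \<in> Pow (X C0)" and T': "T' \<in> Pow R"
    have "(T \<union> T') \<inter> X C = T' \<inter> X C" if "C \<in> F" for C
      using T insert.hyps insert.prems(2)[of C0 C] that by auto
    moreover have "(T \<union> T') \<inter> X C0 = T" using T T' disj by auto
    ultimately show "(\<Prod>C\<in>insert C0 F. h C ((T \<union> T') \<inter> X C)) = h C0 T * (\<Prod>C\<in>F. h C (T' \<inter> X C))"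
      using insert.hyps by simp
  qed
  also have "\<dots> = (\<Sum>T\<in>Pow (X C0). h C0 T) * (\<Sum>T'\<in>Pow R. \<Prod>C\<in>F. h C (T' \<inter> X C))"
    by (simp add: sum_product)
  finally show ?case using insert by (simp add: R_def)
qed simp

definition colouring_prob :: "ereal \<Rightarrow> bool \<Rightarrow> 'a set \<Rightarrow> 'a set \<Rightarrow> real" where
  "colouring_prob t s X T = ptr t s True ^ card T * ptr t s False ^ card (X - T)"

text \<open>The factor of \<open>W \<cdot> \<nu>\<^sup>\<infinity>\<close> contributed by a single cluster \<open>C\<close>: a finite cluster is
  in state \<open>+\<close> (weight \<open>\<alpha>\<^bsup>|C \<inter> \<Lambda>|\<^esup>\<close>) or \<open>-\<close> (weight \<open>\<rho>\<close>), an infinite one only in state \<open>+\<close>.\<close>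
definition cluster_weight :: "real \<Rightarrow> real \<Rightarrow> ereal \<Rightarrow> ('d::finite) pt set \<Rightarrow> 'd ccfg \<Rightarrow> 'd pt set \<Rightarrow> 'd pt set \<Rightarrow> real" where
  "cluster_weight lp lm t L eta S C =
     (lp / lm) ^ card (C \<inter> L) * colouring_prob t True (C \<inter> L) (S \<inter> (C \<inter> L))
     + (if finite C then colouring_prob t False (C \<inter> L) (S \<inter> (C \<inter> L)) * rho lp lm t (restr eta (C - L))
        else 0)"

definition cluster_nu :: "real \<Rightarrow> real \<Rightarrow> ereal \<Rightarrow> ('d::finite) pt set \<Rightarrow> 'd ccfg \<Rightarrow> 'd pt set \<Rightarrow> 'd pt set \<Rightarrow> real" where
  "cluster_nu lp lm t L eta C T = (if finite C then
      ((lp / lm) ^ card (C \<inter> L) * colouring_prob t True (C \<inter> L) T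
        + colouring_prob t False (C \<inter> L) T * rho lp lm t (restr eta (C - L)))
      / ((lp / lm) ^ card (C \<inter> L) + rho lp lm t (restr eta (C - L)))
    else colouring_prob t True (C \<inter> L) T)"

lemma prod_split_finite:
  assumes "finite F"
  shows "prod g F = prod g {C \<in> F. finite C} * prod g {C \<in> F. infinite C}"
proof -
  have "F = {C \<in> F. finite C} \<union> {C \<in> F. infinite C}" by auto
  then show ?thesis using assms by (metis (no_types, lifting) prod.union_disjoint finite_Un disjoint_iff mem_Collect_eq)
qed

lemma prod_colouring_prob_UN:
  assumes "finite F" "\<And>C. C \<in> F \<Longrightarrow> finite (X C)"
    and "\<And>C D. C \<in> F \<Longrightarrow> D \<in> F \<Longrightarrow> C \<noteq> D \<Longrightarrow> X C \<inter> X D = {}"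
  shows "(\<Prod>C\<in>F. c ^ card (X C) * colouring_prob t s (X C) (S \<inter> X C))
    = c ^ card (\<Union>C\<in>F. X C) * colouring_prob t s (\<Union>C\<in>F. X C) (S \<inter> (\<Union>C\<in>F. X C))"
proof -
  have sets: "S \<inter> (\<Union>C\<in>F. X C) = (\<Union>C\<in>F. S \<inter> X C)"
    "(\<Union>C\<in>F. X C) - S \<inter> (\<Union>C\<in>F. X C) = (\<Union>C\<in>F. X C - S \<inter> X C)"
    by auto
  have "card (\<Union>C\<in>F. X C) = (\<Sum>C\<in>F. card (X C))"
    "card (\<Union>C\<in>F. S \<inter> X C) = (\<Sum>C\<in>F. card (S \<inter> X C))"
    "card (\<Union>C\<in>F. X C - S \<inter> X C) = (\<Sum>C\<in>F. card (X C - S \<inter> X C))"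
    using assms by (intro card_UN_disjoint; blast)+
  then show ?thesis unfolding colouring_prob_def sets(2) unfolding sets(1)
    by (simp add: power_sum prod.distrib)
qed

context asymmetric_regime
begin

lemma colouring_prob_nonneg: "0 \<le> colouring_prob t s X T"
  using ptr_pos by (simp add: colouring_prob_def less_imp_le)

lemma sum_colouring_prob:
  assumes "finite X"
  shows "(\<Sum>T\<in>Pow X. colouring_prob t s X T) = 1"
proof -
  have "(\<Prod>x\<in>X. ptr t s True + ptr t s False) = (\<Sum>T\<in>Pow X. colouring_prob t s X T)"
    unfolding prod_add[OF assms] colouring_prob_def by simp
  then show ?thesis by (simp add: ptr_sum_eq_1)
qed

lemma colouring_prob_minus_le:
  assumes "finite X" "T \<subseteq> X"
  shows "colouring_prob t False X T \<le> alpha ^ card X * colouring_prob t True X T"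
proof -
  have X: "card X = card T + card (X - T)"
    using assms by (metis card_Diff_subset card_mono diff_add_inverse le_add_diff_inverse finite_subset)
  have "colouring_prob t False X T \<le> (alpha * ptr t True True) ^ card T * (alpha * ptr t True False) ^ card (X - T)"
    unfolding colouring_prob_def using ptr_pos ptr_minus_le
    using alpha_gt_1 by (intro mult_mono power_mono) (auto intro: less_imp_le mult_nonneg_nonneg)
  then show ?thesis by (simp add: X colouring_prob_def power_mult_distrib power_add mult_ac)
qed

lemma alpha_pow_add_rho_pos: "0 < (lp / lm) ^ k + rho lp lm t w"
  using rho_pos[of w] lm_less_lp lm_pos by (intro add_pos_pos) auto

lemma nuinf_eq_prod_cluster_nu:
  assumes "finite (CL a L eta \<omega>L)"
  shows "nuinf a lp lm t L eta \<omega>L S = (\<Prod>C\<in>CL a L eta \<omega>L. cluster_nu lp lm t L eta C (S \<inter> (C \<inter> L)))"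
  unfolding prod_split_finite[OF assms, of "\<lambda>C. cluster_nu lp lm t L eta C (S \<inter> (C \<inter> L))"] nuinf_def
  by (subst mult.commute, intro arg_cong2[where f="(*)"] prod.cong refl)
    (auto simp: cluster_nu_def colouring_prob_def Diff_Int)

lemma Wt_mult_nuinf:
  assumes "finite (CL a L eta \<omega>L)"
  shows "Wt a lp lm t L eta \<omega>L * nuinf a lp lm t L eta \<omega>L S
    = (\<Prod>C\<in>CL a L eta \<omega>L. cluster_weight lp lm t L eta S C)"
proof -
  let ?F = "CL a L eta \<omega>L" and ?nu = "\<lambda>C. cluster_nu lp lm t L eta C (S \<inter> (C \<inter> L))"
  have "Wt a lp lm t L eta \<omega>L * nuinf a lp lm t L eta \<omega>L S
     = (\<Prod>C\<in>{C \<in> ?F. finite C}. ((lp / lm) ^ card (C \<inter> L) + rho lp lm t (restr eta (C - L))) * ?nu C)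
     * (\<Prod>C\<in>{C \<in> ?F. infinite C}. (lp / lm) ^ card (C \<inter> L) * ?nu C)"
    unfolding Wt_def nuinf_eq_prod_cluster_nu[OF assms] prod_split_finite[OF assms, of ?nu]
    by (simp add: prod.distrib mult_ac)
  also have "\<dots> = (\<Prod>C\<in>{C \<in> ?F. finite C}. cluster_weight lp lm t L eta S C)
      * (\<Prod>C\<in>{C \<in> ?F. infinite C}. cluster_weight lp lm t L eta S C)"
  proof (intro arg_cong2[where f="(*)"] prod.cong refl)
    fix C assume "C \<in> {C \<in> ?F. finite C}"
    then show "((lp / lm) ^ card (C \<inter> L) + rho lp lm t (restr eta (C - L))) * ?nu C
        = cluster_weight lp lm t L eta S C"
      using alpha_pow_add_rho_pos[of "card (C \<inter> L)" "restr eta (C - L)"]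
      by (simp add: cluster_nu_def cluster_weight_def)
  qed (simp add: cluster_nu_def cluster_weight_def)
  also have "\<dots> = (\<Prod>C\<in>?F. cluster_weight lp lm t L eta S C)"
    by (rule prod_split_finite[OF assms, symmetric])
  finally show ?thesis .
qed

lemma sum_cluster_nu:
  assumes "finite (C \<inter> L)"
  shows "(\<Sum>T\<in>Pow (C \<inter> L). cluster_nu lp lm t L eta C T) = 1"
proof (cases "finite C")
  case True
  let ?al = "(lp / lm) ^ card (C \<inter> L)" and ?rho = "rho lp lm t (restr eta (C - L))"
  have "(\<Sum>T\<in>Pow (C \<inter> L). cluster_nu lp lm t L eta C T)
     = (?al * (\<Sum>T\<in>Pow (C \<inter> L). colouring_prob t True (C \<inter> L) T)
        + (\<Sum>T\<in>Pow (C \<inter> L). colouring_prob t False (C \<inter> L) T) * ?rho) / (?al + ?rho)"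
    using True by (simp add: cluster_nu_def sum_divide_distrib[symmetric] sum_distrib_left
        sum_distrib_right sum.distrib)
  then show ?thesis
    using sum_colouring_prob[OF assms] alpha_pow_add_rho_pos[of "card (C \<inter> L)" "restr eta (C - L)"]
    by simp
qed (simp add: cluster_nu_def sum_colouring_prob[OF assms] del: Pow_Int_eq)

lemma sum_nuinf:
  assumes fin: "finite (CL a L eta \<omega>L)"
    and cover: "(\<Union>C\<in>CL a L eta \<omega>L. C \<inter> L) = \<omega>L" "finite \<omega>L"
    and disj: "\<And>C D. C \<in> CL a L eta \<omega>L \<Longrightarrow> D \<in> CL a L eta \<omega>L \<Longrightarrow> C \<noteq> D \<Longrightarrow> C \<inter> D = {}"
  shows "(\<Sum>S\<in>Pow \<omega>L. nuinf a lp lm t L eta \<omega>L S) = 1"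
proof -
  have fin_C: "finite (C \<inter> L)" if "C \<in> CL a L eta \<omega>L" for C
    using cover that by (metis UN_upper finite_subset)
  have "(\<Sum>S\<in>Pow \<omega>L. nuinf a lp lm t L eta \<omega>L S)
     = (\<Sum>S\<in>Pow (\<Union>C\<in>CL a L eta \<omega>L. C \<inter> L). \<Prod>C\<in>CL a L eta \<omega>L. cluster_nu lp lm t L eta C (S \<inter> (C \<inter> L)))"
    unfolding cover(1) nuinf_eq_prod_cluster_nu[OF fin] ..
  also have "\<dots> = (\<Prod>C\<in>CL a L eta \<omega>L. \<Sum>T\<in>Pow (C \<inter> L). cluster_nu lp lm t L eta C T)"
    using disj by (intro sum_Pow_UN_prod[OF fin fin_C]) blast+
  also have "\<dots> = 1" using fin_C sum_cluster_nu by (intro prod.neutral) blast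
  finally show ?thesis .
qed

lemma cluster_weight_nonneg: "0 \<le> cluster_weight lp lm t L eta S C"
proof -
  have "0 \<le> lp / lm"
    using lm_less_lp lm_pos by simp
  then show ?thesis
    using colouring_prob_nonneg unfolding cluster_weight_def by (auto intro!: add_nonneg_nonneg mult_nonneg_nonneg)
qed

text \<open>Since \<open>p\<^sub>t(-,\<cdot>) \<le> \<alpha> p\<^sub>t(+,\<cdot>)\<close>, the \<open>-\<close> state of a cluster weighs at most \<open>\<rho>\<close> times its \<open>+\<close> state.\<close>
lemma cluster_weight_bounds:
  fixes S :: "('d::finite) pt set"
  assumes "finite (C \<inter> L)" "rho lp lm t (restr eta (C - L)) \<le> k" "finite C"
  defines "wplus \<equiv> alpha ^ card (C \<inter> L) * colouring_prob t True (C \<inter> L) (S \<inter> (C \<inter> L))"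
  shows "wplus \<le> cluster_weight lp lm t L eta S C \<and> cluster_weight lp lm t L eta S C \<le> (1 + k) * wplus"
proof -
  let ?minus = "colouring_prob t False (C \<inter> L) (S \<inter> (C \<inter> L)) * rho lp lm t (restr eta (C - L))"
  have wplus_nonneg: "0 \<le> wplus"
    unfolding wplus_def using colouring_prob_nonneg alpha_gt_1 by (intro mult_nonneg_nonneg) auto
  moreover have "colouring_prob t False (C \<inter> L) (S \<inter> (C \<inter> L)) \<le> wplus"
    unfolding wplus_def by (rule colouring_prob_minus_le[OF assms(1) Int_lower2])
  then have "?minus \<le> wplus * k"
    using assms(2) wplus_nonneg colouring_prob_nonneg by (intro mult_mono) auto
  moreover have "0 \<le> ?minus" by (intro mult_nonneg_nonneg colouring_prob_nonneg rho_nonneg)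
  ultimately show ?thesis using assms(3)
    by (simp add: cluster_weight_def wplus_def alpha_def distrib_right mult.commute)
qed

end

section \<open>Decoupling from the outer boundary condition\<close>

lemma setdist_le_infdist: "y \<in> A \<Longrightarrow> setdist B A \<le> infdist y B"
  by (metis infdist_eq_setdist setdist_le_sing setdist_sym)

lemma ccfgs_finite_bounded: "u \<in> ccfgs \<Longrightarrow> bounded K \<Longrightarrow> finite (grey u \<inter> K)"
  by (auto simp: ccfgs_def locfin_def)

lemma grey_restr: "grey (restr w D) = grey w \<inter> D"
  by (auto simp: grey_def restr_def)

lemma grey_cat: "grey (cat u v) = grey u \<union> grey v"
  by (auto simp: grey_def cat_def)

lemma restr_cat: "restr (cat u v) D = cat (restr u D) (restr v D)"
  by (auto simp: cat_def restr_def)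

lemma restr_restr: "restr (restr u D) D' = restr u (D \<inter> D')"
  by (auto simp: restr_def)

lemma subset_nbhd: "0 < a \<Longrightarrow> B \<subseteq> nbhd a B"
  by (force simp: nbhd_def)

context asymmetric_regime
begin

definition decay_factor :: "real \<Rightarrow> 'a::metric_space set \<Rightarrow> 'a set \<Rightarrow> real" where
  "decay_factor a B L = exp (3 * g_minus - g_minus * setdist B (- L) / (2 * a))"

end

text \<open>The number of points at mutual distance \<open>\<ge> 2a\<close> in a ball of radius \<open>r + 2a\<close>, by volume.\<close>
definition cluster_count_bound :: "real \<Rightarrow> real \<Rightarrow> nat \<Rightarrow> nat" where
  "cluster_count_bound a r n = nat \<lfloor>((r + 3 * a) / a) ^ n\<rfloor>"

text \<open>The clusters seen by \<open>\<gamma>\<^sup>\<infinity>\<^sub>B\<close> for inner configuration \<open>om\<close> and boundary condition \<open>w\<close> on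
  \<open>\<Lambda> - B\<close>, \<open>w'\<close> on \<open>\<Lambda>\<^sup>c\<close>. The clusters of \<open>Z\<close> that stay \<open>2a\<close>-away from \<open>\<Lambda>\<^sup>c\<close> are shielded:
  they do not depend on \<open>w'\<close>. Every other (exposed) cluster reaches from \<open>B\<close> to \<open>\<Lambda>\<^sup>c\<close>.\<close>
locale boundary_decoupling = asymmetric_regime +
  fixes a :: real and x0 :: "real^'d::finite" and r :: real and L :: "(real^'d) set"
    and w w' :: "'d ccfg" and om :: "(real^'d) set"
  assumes a_pos: "0 < a" and r_pos: "0 < r" and ball_subset_L: "ball x0 r \<subseteq> L"
    and w_ccfg: "w \<in> ccfgs" and w'_ccfg: "w' \<in> ccfgs"
    and om_finite: "finite om" and om_subset_ball: "om \<subseteq> ball x0 r"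
begin

definition "B = ball x0 r"
definition "eta = cat (restr w (L - B)) (restr w' (- L))"
definition "E = grey (restr eta (- B))"
definition "Y = grey w' \<inter> - L"
definition "Z = om \<union> (grey w \<inter> (L - B))"
definition "V = om \<union> E"
definition "Cs = CL a B eta om"
definition "shielded = {D \<in> clusters a Z. D \<inter> nbhd a (- L) = {} \<and> \<not> D \<subseteq> - nbhd a B}"
definition "R = om - \<Union>shielded"
definition "ref_weight S = (\<Prod>D\<in>shielded. cluster_weight lp lm t B w S D)
    * (alpha ^ card R * colouring_prob t True R (S \<inter> R))"

lemma B_subset_L: "B \<subseteq> L"
  using ball_subset_L by (simp add: B_def)

lemma om_subset_B: "om \<subseteq> B"
  using om_subset_ball by (simp add: B_def)

lemma E_eq: "E = (grey w \<inter> (L - B)) \<union> Y"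
  using B_subset_L
  by (auto simp: E_def eta_def Y_def restr_cat restr_restr grey_cat grey_restr)

lemma E_Int_B: "E \<inter> B = {}"
  by (auto simp: E_def grey_restr)

lemma V_eq: "V = Z \<union> Y"
  by (auto simp: V_def Z_def E_eq)

lemma Z_subset_V: "Z \<subseteq> V"
  by (auto simp: V_eq)

lemma V_Int_B: "V \<inter> B = om"
  using om_subset_B E_Int_B by (auto simp: V_def)

lemma Cs_eq: "Cs = {C \<in> clusters a V. \<not> C \<subseteq> - nbhd a B}"
  by (simp add: Cs_def CL_def V_def E_def)

lemma Cs_subset_V: "C \<in> Cs \<Longrightarrow> C \<subseteq> V"
  by (auto simp: Cs_eq dest: clusters_subset)

lemma nbhd_B_subset: "nbhd a B \<subseteq> ball x0 (r + 2 * a)"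
  using dist_triangle_less_add[of x0 _ r _ "2 * a"] by (fastforce simp: nbhd_def B_def dist_commute)

lemma finite_V_nbhd: "finite (V \<inter> nbhd a B)"
proof (rule finite_subset)
  show "V \<inter> nbhd a B \<subseteq> om \<union> (grey w \<inter> ball x0 (r + 2 * a)) \<union> (grey w' \<inter> ball x0 (r + 2 * a))"
    using nbhd_B_subset by (auto simp: V_eq Z_def Y_def)
  show "finite (om \<union> (grey w \<inter> ball x0 (r + 2 * a)) \<union> (grey w' \<inter> ball x0 (r + 2 * a)))"
    using om_finite ccfgs_finite_bounded[OF w_ccfg] ccfgs_finite_bounded[OF w'_ccfg] by auto
qed

lemma Cs_subset_image: "Cs \<subseteq> cluster a V ` (V \<inter> nbhd a B)"
proof
  fix C assume "C \<in> Cs"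
  then obtain z where "C \<in> clusters a V" "z \<in> C" "z \<in> nbhd a B" by (auto simp: Cs_eq)
  then show "C \<in> cluster a V ` (V \<inter> nbhd a B)"
    using clusters_subset clusters_eq_cluster by blast
qed

lemma finite_Cs: "finite Cs"
  using Cs_subset_image finite_V_nbhd finite_subset by blast

lemma card_Cs_le: "card Cs \<le> card (V \<inter> nbhd a B)"
  using card_mono[OF finite_imageI[OF finite_V_nbhd] Cs_subset_image] card_image_le[OF finite_V_nbhd]
  by (meson le_trans)

lemma Cs_cover: "(\<Union>C\<in>Cs. C \<inter> B) = om"
proof
  show "(\<Union>C\<in>Cs. C \<inter> B) \<subseteq> om"
    using V_Int_B Cs_subset_V by blast
  show "om \<subseteq> (\<Union>C\<in>Cs. C \<inter> B)"
  proof
    fix z assume z: "z \<in> om"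
    then have "z \<in> V" "z \<in> B" "z \<in> nbhd a B"
      using om_subset_B subset_nbhd[OF a_pos] by (auto simp: V_def)
    then show "z \<in> (\<Union>C\<in>Cs. C \<inter> B)"
      using cluster_in_clusters cluster_self[of z a V] by (fastforce simp: Cs_eq)
  qed
qed

lemma Cs_disjoint: "C \<in> Cs \<Longrightarrow> D \<in> Cs \<Longrightarrow> C \<noteq> D \<Longrightarrow> C \<inter> D = {}"
  using clusters_eqI by (fastforce simp: Cs_eq)

lemma finite_Cs_Int_B: "C \<in> Cs \<Longrightarrow> finite (C \<inter> B)"
  using Cs_cover om_finite by (metis UN_upper finite_subset)

lemma Wt_mult_nuinf_eq: "Wt a lp lm t B eta om * nuinf a lp lm t B eta om S
    = (\<Prod>C\<in>Cs. cluster_weight lp lm t B eta S C)"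
  using Wt_mult_nuinf[OF finite_Cs[unfolded Cs_def]] by (simp add: Cs_def)

lemma sum_nuinf_eq_1: "(\<Sum>S\<in>Pow om. nuinf a lp lm t B eta om S) = 1"
  using sum_nuinf[OF finite_Cs[unfolded Cs_def] Cs_cover[unfolded Cs_def] om_finite] Cs_disjoint
  by (simp add: Cs_def)

text \<open>A cluster of \<open>Z\<close> that stays away from \<open>\<Lambda>\<^sup>c\<close> cannot be linked to a point of \<open>Y\<close>.\<close>
lemma cluster_V_eq_cluster_Z:
  assumes z: "z \<in> Z" and far: "cluster a Z z \<inter> nbhd a (- L) = {}"
  shows "cluster a V z = cluster a Z z"
proof
  show "cluster a Z z \<subseteq> cluster a V z" by (rule cluster_mono[OF Z_subset_V])
  show "cluster a V z \<subseteq> cluster a Z z"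
  proof (rule cluster_subsetI)
    fix y u assume y: "y \<in> cluster a Z z" and yu: "(y, u) \<in> linked a V"
    have "y \<in> Z" using y cluster_subset[OF z] by auto
    moreover have "u \<notin> Y"
    proof
      assume "u \<in> Y"
      then have "y \<in> nbhd a (- L)" using linkedD[OF yu] by (auto simp: nbhd_def Y_def)
      then show False using far y by auto
    qed
    then have "u \<in> Z" using linkedD[OF yu] by (auto simp: V_eq)
    ultimately have "(y, u) \<in> linked a Z" using linkedD[OF yu] by (auto simp: linked_def)
    then show "u \<in> cluster a Z z" using cluster_linked_step[OF y] by blast
  qed (rule cluster_self)
qed

lemma shielded_subset_Cs: "shielded \<subseteq> Cs"
proof
  fix D assume D: "D \<in> shielded"
  then obtain z where z: "z \<in> Z" "D = cluster a Z z" by (auto simp: shielded_def clusters_def)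
  then have "D = cluster a V z" using cluster_V_eq_cluster_Z D by (auto simp: shielded_def)
  moreover have "z \<in> V" using z(1) Z_subset_V by auto
  ultimately show "D \<in> Cs" using D cluster_in_clusters[of z V a] by (auto simp: Cs_eq shielded_def)
qed

lemma exposed_meets_nbhd_complement:
  assumes C: "C \<in> Cs - shielded"
  shows "C \<inter> nbhd a (- L) \<noteq> {}"
proof
  assume far: "C \<inter> nbhd a (- L) = {}"
  have Cc: "C \<in> clusters a V" and Cn: "\<not> C \<subseteq> - nbhd a B" using C by (auto simp: Cs_eq)
  then obtain v where v: "v \<in> V" "C = cluster a V v" by (auto simp: clusters_def)
  have "C \<inter> Y = {}" using far a_pos by (force simp: Y_def nbhd_def)
  then have vZ: "v \<in> Z" using v cluster_self[of v a V] by (auto simp: V_eq)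
  have "cluster a Z v \<inter> nbhd a (- L) = {}" using far cluster_mono[OF Z_subset_V] v by blast
  then have "C = cluster a Z v" "cluster a Z v \<inter> nbhd a (- L) = {}"
    using cluster_V_eq_cluster_Z[OF vZ] v by auto
  then have "C \<in> shielded" using Cn cluster_in_clusters[OF vZ] by (auto simp: shielded_def)
  then show False using C by auto
qed

lemma grey_eta_cluster: "C \<in> Cs \<Longrightarrow> grey (restr eta (C - B)) = C - B"
  using Cs_subset_V om_subset_B by (fastforce simp: grey_restr V_def E_def)

text \<open>An exposed finite cluster joins the \<open>2a\<close>-neighbourhoods of \<open>B\<close> and of \<open>\<Lambda>\<^sup>c\<close>, so by
  \<open>infdist_cluster_less\<close> it has more than \<open>d(B, \<Lambda>\<^sup>c)/(2a) - 3\<close> points outside \<open>B\<close>, each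
  contributing a factor \<open>exp (-g\<^sub>-)\<close> to \<open>\<rho>\<close>.\<close>
lemma rho_exposed_le:
  assumes C: "C \<in> Cs - shielded" and fin: "finite C"
  shows "rho lp lm t (restr eta (C - B)) \<le> decay_factor a B L"
proof -
  define N where "N = card (C - B)"
  have Cc: "C \<in> clusters a V" using C by (auto simp: Cs_eq)
  obtain x b where x: "x \<in> C" "b \<in> B" "dist x b < 2 * a" using C by (auto simp: Cs_eq nbhd_def)
  have xB: "infdist x B < 2 * a" using infdist_le[OF x(2), of x] x(3) by linarith
  obtain p y where p: "p \<in> C" "y \<in> - L" "dist p y < 2 * a"
    using exposed_meets_nbhd_complement[OF C] by (auto simp: nbhd_def)
  have "infdist p B < 2 * a * (real N + 2)"
    unfolding N_def by (rule infdist_cluster_less[OF a_pos Cc fin x(1) xB p(1)])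
  moreover have "setdist B (- L) \<le> infdist p B + dist p y"
    using setdist_le_infdist[OF p(2), of B] infdist_triangle[of y B p] by (simp add: dist_commute)
  ultimately have "setdist B (- L) < 2 * a * (real N + 3)"
    using p(3) by (simp add: algebra_simps)
  then have "setdist B (- L) / (2 * a) < real N + 3"
    using a_pos by (simp add: divide_less_eq mult.commute)
  then have "g_minus * (setdist B (- L) / (2 * a)) \<le> g_minus * (real N + 3)"
    using g_minus_pos by (intro mult_left_mono) auto
  then have "- real N * g_minus \<le> 3 * g_minus - g_minus * setdist B (- L) / (2 * a)"
    by (simp add: algebra_simps)
  then have "exp (- real N * g_minus) \<le> decay_factor a B L"
    by (simp add: decay_factor_def)
  moreover have "rho lp lm t (restr eta (C - B)) \<le> exp (- real N * g_minus)"
    using rho_le_exp_g_minus[of "restr eta (C - B)"] grey_eta_cluster[of C] C by (simp add: N_def)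
  ultimately show ?thesis by linarith
qed

lemma card_exposed_le: "card (Cs - shielded) \<le> cluster_count_bound a r DIM(real^'d)"
proof -
  have "\<forall>C\<in>Cs - shielded. \<exists>z. z \<in> C \<and> z \<in> nbhd a B" by (auto simp: Cs_eq)
  then obtain z where z: "\<forall>C\<in>Cs - shielded. z C \<in> C \<and> z C \<in> nbhd a B"
    by (metis (no_types) bchoice)
  have inj: "inj_on z (Cs - shielded)"
  proof (rule inj_onI)
    fix C D assume CD: "C \<in> Cs - shielded" "D \<in> Cs - shielded" "z C = z D"
    have "z C \<in> C" "z D \<in> D" using z CD(1,2) by blast+
    then show "C = D" using Cs_disjoint[of C D] CD by auto
  qed
  have "real (card (z ` (Cs - shielded))) \<le> ((r + 2 * a + a) / a) ^ DIM(real^'d)"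
  proof (rule card_separated_subset_ball)
    show "finite (z ` (Cs - shielded))" using finite_Cs by simp
    show "z ` (Cs - shielded) \<subseteq> ball x0 (r + 2 * a)" using z nbhd_B_subset by auto
    show "0 < a" "0 \<le> r + 2 * a" using a_pos r_pos by auto
    fix p q assume p: "p \<in> z ` (Cs - shielded)" and q: "q \<in> z ` (Cs - shielded)" and "p \<noteq> q"
    obtain C where C: "C \<in> Cs - shielded" "p = z C" using p by blast
    obtain D where D: "D \<in> Cs - shielded" "q = z D" using q by blast
    have "C \<in> clusters a V" "D \<in> clusters a V" "C \<noteq> D" "p \<in> C" "q \<in> D"
      using z C D \<open>p \<noteq> q\<close> by (auto simp: Cs_eq)
    then show "2 * a \<le> dist p q" by (rule clusters_dist_ge)
  qed
  moreover have "card (z ` (Cs - shielded)) = card (Cs - shielded)" by (rule card_image[OF inj])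
  moreover have "r + 2 * a + a = r + 3 * a" by simp
  ultimately have "real (card (Cs - shielded)) \<le> ((r + 3 * a) / a) ^ DIM(real^'d)"
    by simp
  then show ?thesis unfolding cluster_count_bound_def by (simp add: le_nat_floor)
qed

lemma cluster_weight_shielded:
  assumes "D \<in> shielded"
  shows "cluster_weight lp lm t B eta S D = cluster_weight lp lm t B w S D"
proof -
  have "D \<subseteq> Z" using assms clusters_subset by (auto simp: shielded_def)
  then have "restr eta (D - B) = restr w (D - B)"
    using om_subset_B by (auto simp: Z_def eta_def restr_def cat_def)
  then show ?thesis by (simp add: cluster_weight_def)
qed

lemma UN_exposed_Int_B: "(\<Union>C\<in>Cs - shielded. C \<inter> B) = R"
proof -
  have "(\<Union>C\<in>Cs - shielded. C \<inter> B) = (\<Union>C\<in>Cs. C \<inter> B) - \<Union>shielded"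
  proof
    show "(\<Union>C\<in>Cs - shielded. C \<inter> B) \<subseteq> (\<Union>C\<in>Cs. C \<inter> B) - \<Union>shielded"
    proof
      fix z assume "z \<in> (\<Union>C\<in>Cs - shielded. C \<inter> B)"
      then obtain C where C: "C \<in> Cs" "C \<notin> shielded" "z \<in> C" "z \<in> B" by auto
      have "z \<notin> D" if "D \<in> shielded" for D
        using that C Cs_disjoint[of C D] shielded_subset_Cs by auto
      then show "z \<in> (\<Union>C\<in>Cs. C \<inter> B) - \<Union>shielded" using C by auto
    qed
  qed auto
  then show ?thesis unfolding Cs_cover R_def .
qed

lemma prod_exposed_bounds:
  fixes S :: "'d pt set"
  defines "wR \<equiv> alpha ^ card R * colouring_prob t True R (S \<inter> R)"
  shows "wR \<le> (\<Prod>C\<in>Cs - shielded. cluster_weight lp lm t B eta S C)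
    \<and> (\<Prod>C\<in>Cs - shielded. cluster_weight lp lm t B eta S C)
      \<le> (1 + decay_factor a B L) ^ cluster_count_bound a r DIM(real^'d) * wR"
proof -
  let ?F = "Cs - shielded" and ?k = "decay_factor a B L"
  define low where "low C = alpha ^ card (C \<inter> B) * colouring_prob t True (C \<inter> B) (S \<inter> (C \<inter> B))" for C
  have k: "0 \<le> ?k" by (simp add: decay_factor_def)
  have low_nonneg: "0 \<le> low C" for C
    unfolding low_def using colouring_prob_nonneg alpha_gt_1 by (intro mult_nonneg_nonneg) auto
  have low: "low C \<le> cluster_weight lp lm t B eta S C
      \<and> cluster_weight lp lm t B eta S C \<le> (1 + ?k) * low C" if C: "C \<in> ?F" for C
  proof (cases "finite C")
    case True
    then show ?thesis
      using cluster_weight_bounds[OF finite_Cs_Int_B rho_exposed_le] C by (auto simp: low_def)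
  next
    case False
    then have "cluster_weight lp lm t B eta S C = low C" by (simp add: cluster_weight_def low_def alpha_def)
    moreover have "1 * low C \<le> (1 + ?k) * low C" using k low_nonneg by (intro mult_right_mono) auto
    ultimately show ?thesis by simp
  qed
  have "(\<Prod>C\<in>?F. low C) = wR"
    unfolding low_def wR_def UN_exposed_Int_B[symmetric] using finite_Cs finite_Cs_Int_B Cs_disjoint
    by (intro prod_colouring_prob_UN) auto
  moreover have "(\<Prod>C\<in>?F. low C) \<le> (\<Prod>C\<in>?F. cluster_weight lp lm t B eta S C)"
    using low low_nonneg by (intro prod_mono) auto
  moreover have "(\<Prod>C\<in>?F. cluster_weight lp lm t B eta S C) \<le> (1 + ?k) ^ card ?F * (\<Prod>C\<in>?F. low C)"
    using low prod_mono[of ?F "cluster_weight lp lm t B eta S" "\<lambda>C. (1 + ?k) * low C"]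
    by (simp add: prod.distrib cluster_weight_nonneg)
  moreover have "(1 + ?k) ^ card ?F \<le> (1 + ?k) ^ cluster_count_bound a r DIM(real^'d)"
    using card_exposed_le k by (intro power_increasing) auto
  moreover have "0 \<le> wR"
    unfolding wR_def using colouring_prob_nonneg alpha_gt_1 by (intro mult_nonneg_nonneg) auto
  ultimately show ?thesis by (meson mult_right_mono order_trans)
qed

lemma prod_cluster_weight_bounds:
  "ref_weight S \<le> (\<Prod>C\<in>Cs. cluster_weight lp lm t B eta S C)
    \<and> (\<Prod>C\<in>Cs. cluster_weight lp lm t B eta S C)
      \<le> (1 + decay_factor a B L) ^ cluster_count_bound a r DIM(real^'d) * ref_weight S"
proof -
  define P where "P = (\<Prod>C\<in>Cs - shielded. cluster_weight lp lm t B eta S C)"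
  define Q where "Q = (\<Prod>D\<in>shielded. cluster_weight lp lm t B w S D)"
  define wR where "wR = alpha ^ card R * colouring_prob t True R (S \<inter> R)"
  define c where "c = (1 + decay_factor a B L) ^ cluster_count_bound a r DIM(real^'d)"
  have "(\<Prod>C\<in>Cs. cluster_weight lp lm t B eta S C)
      = P * (\<Prod>D\<in>shielded. cluster_weight lp lm t B eta S D)"
    unfolding P_def by (rule prod.subset_diff[OF shielded_subset_Cs finite_Cs])
  also have "(\<Prod>D\<in>shielded. cluster_weight lp lm t B eta S D) = Q"
    unfolding Q_def by (rule prod.cong[OF refl cluster_weight_shielded])
  finally have split: "(\<Prod>C\<in>Cs. cluster_weight lp lm t B eta S C) = P * Q" .
  have Q: "0 \<le> Q" unfolding Q_def by (intro prod_nonneg cluster_weight_nonneg)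
  have "wR \<le> P" "P \<le> c * wR"
    using prod_exposed_bounds[of S] unfolding P_def wR_def c_def by auto
  then have "wR * Q \<le> P * Q" "P * Q \<le> c * (wR * Q)"
    using mult_right_mono[OF _ Q] by (auto simp flip: mult.assoc)
  moreover have "ref_weight S = wR * Q" by (simp add: ref_weight_def wR_def Q_def)
  ultimately show ?thesis unfolding split c_def by simp
qed

lemma Wt_pos: "0 < Wt a lp lm t B eta om"
  unfolding Wt_def using lm_less_lp lm_pos
  by (intro mult_pos_pos prod_pos ballI alpha_pow_add_rho_pos zero_less_power) auto

lemma card_V_nbhd: "card (V \<inter> nbhd a B) = card om + card (E \<inter> nbhd a B)"
proof -
  have "V \<inter> nbhd a B = om \<union> (E \<inter> nbhd a B)"
    using om_subset_B subset_nbhd[OF a_pos] by (auto simp: V_def)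
  moreover have "finite (E \<inter> nbhd a B)" using finite_V_nbhd by (rule finite_subset[rotated]) (auto simp: V_def)
  moreover have "om \<inter> (E \<inter> nbhd a B) = {}" using om_subset_B E_Int_B by auto
  ultimately show ?thesis by (simp add: card_Un_disjoint[OF om_finite])
qed

lemma Wt_le: "Wt a lp lm t B eta om \<le> 2 ^ card (E \<inter> nbhd a B) * (2 * alpha) ^ card om"
proof -
  let ?F = "CL a B eta om" and ?g = "\<lambda>C. 2 * alpha ^ card (C \<inter> B)"
  have "alpha ^ card (C \<inter> B) + rho lp lm t (restr eta (C - B)) \<le> ?g C" for C
    using rho_le_1[of "restr eta (C - B)"] one_le_power[OF less_imp_le[OF alpha_gt_1], of "card (C \<inter> B)"]
    by linarith
  then have "(\<Prod>C\<in>{C \<in> ?F. finite C}. alpha ^ card (C \<inter> B) + rho lp lm t (restr eta (C - B)))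
      \<le> (\<Prod>C\<in>{C \<in> ?F. finite C}. ?g C)"
    using alpha_gt_1 by (intro prod_mono) (auto intro!: add_nonneg_nonneg)
  moreover have "(\<Prod>C\<in>{C \<in> ?F. infinite C}. alpha ^ card (C \<inter> B)) \<le> (\<Prod>C\<in>{C \<in> ?F. infinite C}. ?g C)"
    using alpha_gt_1 by (intro prod_mono) simp
  moreover have "0 \<le> (\<Prod>C\<in>{C \<in> ?F. finite C}. ?g C)"
    using alpha_gt_1 by (simp add: prod_nonneg)
  moreover have "0 \<le> (\<Prod>C\<in>{C \<in> ?F. infinite C}. alpha ^ card (C \<inter> B))"
    using alpha_gt_1 by (simp add: prod_nonneg)
  ultimately have "Wt a lp lm t B eta om \<le> (\<Prod>C\<in>{C \<in> ?F. finite C}. ?g C) * (\<Prod>C\<in>{C \<in> ?F. infinite C}. ?g C)"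
    unfolding Wt_def alpha_def[symmetric] by (rule mult_mono)
  also have "\<dots> = (\<Prod>C\<in>Cs. ?g C)"
    unfolding Cs_def by (rule prod_split_finite[OF finite_Cs[unfolded Cs_def], symmetric])
  also have "\<dots> = 2 ^ card Cs * alpha ^ (\<Sum>C\<in>Cs. card (C \<inter> B))"
    by (simp add: prod.distrib power_sum)
  also have "(\<Sum>C\<in>Cs. card (C \<inter> B)) = card om"
  proof -
    have "card (\<Union>C\<in>Cs. C \<inter> B) = (\<Sum>C\<in>Cs. card (C \<inter> B))"
      using finite_Cs_Int_B Cs_disjoint by (intro card_UN_disjoint[OF finite_Cs]) blast+
    then show ?thesis unfolding Cs_cover ..
  qed
  also have "2 ^ card Cs * alpha ^ card om \<le> 2 ^ card (V \<inter> nbhd a B) * alpha ^ card om"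
    using card_Cs_le alpha_gt_1 by (intro mult_right_mono power_increasing) auto
  also have "\<dots> = 2 ^ card (E \<inter> nbhd a B) * (2 * alpha) ^ card om"
    by (simp add: card_V_nbhd power_add power_mult_distrib)
  finally show ?thesis .
qed

end

section \<open>Relabelling invariance and measurability\<close>

locale cluster_relabelling =
  fixes a :: real and B :: "(real^'d::finite) set" and eta :: "'d ccfg" and h :: "real^'d \<Rightarrow> real^'d"
    and om om' :: "(real^'d) set"
  assumes inj: "inj_on h (om \<union> grey (restr eta (- B)))"
    and fix_E: "\<And>e. e \<in> grey (restr eta (- B)) \<Longrightarrow> h e = e"
    and om_subset: "om \<subseteq> B" and om'_subset: "om' \<subseteq> B" and image_om: "h ` om = om'"
    and dist_iff: "\<And>u v. u \<in> om \<union> grey (restr eta (- B)) \<Longrightarrow> v \<in> om \<union> grey (restr eta (- B))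
      \<Longrightarrow> dist (h u) (h v) < 2 * a \<longleftrightarrow> dist u v < 2 * a"
begin

abbreviation "E \<equiv> grey (restr eta (- B))"
abbreviation "V \<equiv> om \<union> E"

lemma E_Int_B: "E \<inter> B = {}"
  by (auto simp: grey_def restr_def)

lemma mem_B_iff: "z \<in> V \<Longrightarrow> h z \<in> B \<longleftrightarrow> z \<in> B"
proof (cases "z \<in> om")
  case True
  then have "h z \<in> om'" using image_om by blast
  then show ?thesis using True om_subset om'_subset by blast
next
  case False
  moreover assume "z \<in> V"
  ultimately have "z \<in> E" by simp
  then show ?thesis using fix_E[of z] E_Int_B by auto
qed

lemma fix_outside_B: "z \<in> V \<Longrightarrow> z \<notin> B \<Longrightarrow> h z = z"
  using om_subset fix_E by auto

lemma mem_nbhd_iff: "z \<in> V \<Longrightarrow> h z \<in> nbhd a B \<longleftrightarrow> z \<in> nbhd a B"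
proof (cases "z \<in> B")
  case True
  have nbhd_iff: "y \<in> nbhd a B \<longleftrightarrow> 0 < a" if "y \<in> B" for y
  proof
    assume "y \<in> nbhd a B"
    then obtain b where "dist y b < 2 * a" by (auto simp: nbhd_def)
    then show "0 < a" using zero_le_dist[of y b] by linarith
  qed (use that in \<open>force simp: nbhd_def\<close>)
  moreover assume "z \<in> V"
  ultimately show ?thesis using True mem_B_iff by simp
qed (simp add: fix_outside_B)

lemma CL_subset_V: "C \<in> CL a B eta om \<Longrightarrow> C \<subseteq> V"
  using clusters_subset by (auto simp: CL_def)

lemma CL_relabel: "CL a B eta om' = (\<lambda>C. h ` C) ` CL a B eta om"
proof -
  have "bij_betw h V (om' \<union> E)"
    using inj image_om fix_E by (auto simp: bij_betw_def image_Un)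
  then have cl: "clusters a (om' \<union> E) = (\<lambda>C. h ` C) ` clusters a V"
    by (rule clusters_image) (use dist_iff in auto)
  have nb: "h ` C \<subseteq> - nbhd a B \<longleftrightarrow> C \<subseteq> - nbhd a B" if "C \<in> clusters a V" for C
    using clusters_subset[OF that] mem_nbhd_iff by blast
  show ?thesis
    unfolding CL_def cl
  proof
    show "(\<lambda>C. h ` C) ` {C \<in> clusters a V. \<not> C \<subseteq> - nbhd a B}
        \<subseteq> {D \<in> (\<lambda>C. h ` C) ` clusters a V. \<not> D \<subseteq> - nbhd a B}"
      using nb by auto
    show "{D \<in> (\<lambda>C. h ` C) ` clusters a V. \<not> D \<subseteq> - nbhd a B}
        \<subseteq> (\<lambda>C. h ` C) ` {C \<in> clusters a V. \<not> C \<subseteq> - nbhd a B}"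
    proof
      fix D assume "D \<in> {D \<in> (\<lambda>C. h ` C) ` clusters a V. \<not> D \<subseteq> - nbhd a B}"
      then obtain C where "C \<in> clusters a V" "D = h ` C" "\<not> h ` C \<subseteq> - nbhd a B" by auto
      then show "D \<in> (\<lambda>C. h ` C) ` {C \<in> clusters a V. \<not> C \<subseteq> - nbhd a B}" using nb by auto
    qed
  qed
qed

lemma inj_on_image_CL: "inj_on (\<lambda>C. h ` C) (CL a B eta om)"
  using CL_subset_V inj by (intro inj_onI) (metis inj_on_image_eq_iff)

lemma image_cluster:
  assumes C: "C \<subseteq> V" and S: "S \<subseteq> om"
  shows "card (h ` C \<inter> B) = card (C \<inter> B)" "h ` C - B = C - B" "finite (h ` C) \<longleftrightarrow> finite C"
    "card (h ` S \<inter> (h ` C \<inter> B)) = card (S \<inter> (C \<inter> B))" "card ((h ` C \<inter> B) - h ` S) = card ((C \<inter> B) - S)"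
proof -
  have "S \<union> C \<subseteq> V" using S C by auto
  then have inj_SC: "inj_on h (S \<union> C)" using inj inj_on_subset by blast
  have CB: "h ` C \<inter> B = h ` (C \<inter> B)" using C mem_B_iff by auto
  show "card (h ` C \<inter> B) = card (C \<inter> B)" unfolding CB by (intro card_image inj_on_subset[OF inj_SC]) auto
  show "h ` C - B = C - B" using C mem_B_iff fix_outside_B by (force simp: image_iff)
  show "finite (h ` C) \<longleftrightarrow> finite C" using inj_SC finite_image_iff inj_on_subset by blast
  have "h ` S \<inter> (h ` C \<inter> B) = h ` (S \<inter> (C \<inter> B))" "(h ` C \<inter> B) - h ` S = h ` ((C \<inter> B) - S)"
    using inj_SC CB by (auto simp: inj_on_def)
  then show "card (h ` S \<inter> (h ` C \<inter> B)) = card (S \<inter> (C \<inter> B))" "card ((h ` C \<inter> B) - h ` S) = card ((C \<inter> B) - S)"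
    using inj_SC by (auto intro!: card_image intro: inj_on_subset)
qed

lemma CL_relabel_finite:
  "{C \<in> CL a B eta om'. finite C} = (\<lambda>C. h ` C) ` {C \<in> CL a B eta om. finite C}"
  "{C \<in> CL a B eta om'. infinite C} = (\<lambda>C. h ` C) ` {C \<in> CL a B eta om. infinite C}"
  using image_cluster(3)[OF CL_subset_V] by (auto simp: CL_relabel)

lemma inj_on_image_CL_finite:
  "inj_on (\<lambda>C. h ` C) {C \<in> CL a B eta om. finite C}"
  "inj_on (\<lambda>C. h ` C) {C \<in> CL a B eta om. infinite C}"
  using inj_on_image_CL by (auto intro: inj_on_subset)

lemma Wt_relabel: "Wt a lp lm t B eta om' = Wt a lp lm t B eta om"
  unfolding Wt_def CL_relabel_finite prod.reindex[OF inj_on_image_CL_finite(1)]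
    prod.reindex[OF inj_on_image_CL_finite(2)] comp_def
  using image_cluster[OF CL_subset_V, of _ "{}"] by (intro arg_cong2[where f="(*)"] prod.cong refl) auto

lemma nuinf_relabel: "S \<subseteq> om \<Longrightarrow> nuinf a lp lm t B eta om' (h ` S) = nuinf a lp lm t B eta om S"
  unfolding nuinf_def CL_relabel_finite prod.reindex[OF inj_on_image_CL_finite(1)]
    prod.reindex[OF inj_on_image_CL_finite(2)] comp_def
  using image_cluster[OF CL_subset_V] by (intro arg_cong2[where f="(*)"] prod.cong refl) auto

end

text \<open>Two finite configurations \<open>x\<close>, \<open>y\<close> in \<open>B\<close> with the same pattern of coincidences and
  of links, among themselves and to the nearby boundary points, are related by the map
  \<open>x i \<mapsto> y i\<close> fixing everything else.\<close>
definition relabel :: "(nat \<Rightarrow> 'a) \<Rightarrow> (nat \<Rightarrow> 'a) \<Rightarrow> nat \<Rightarrow> 'a \<Rightarrow> 'a" where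
  "relabel x y n z = (if z \<in> x ` {..<n} then y (SOME i. i < n \<and> x i = z) else z)"

definition near_boundary :: "real \<Rightarrow> ('d::finite) pt set \<Rightarrow> 'd ccfg \<Rightarrow> 'd pt set" where
  "near_boundary a B eta = grey (restr eta (- B)) \<inter> nbhd a B"

lemma relabel_apply:
  assumes "\<forall>i<n. \<forall>j<n. x i = x j \<longleftrightarrow> y i = y j" "i < n"
  shows "relabel x y n (x i) = y i"
proof -
  define j where "j = (SOME j. j < n \<and> x j = x i)"
  have "j < n \<and> x j = x i" unfolding j_def by (rule someI[where x = i]) (simp add: assms(2))
  then have "y j = y i" using assms(1)[rule_format, of j i] assms(2) by simp
  then show ?thesis using assms(2) by (simp add: relabel_def j_def[symmetric])
qed

lemma relabel_image:
  assumes "\<forall>i<n. \<forall>j<n. x i = x j \<longleftrightarrow> y i = y j" "J \<subseteq> {..<n}"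
  shows "relabel x y n ` x ` J = y ` J"
proof -
  have "relabel x y n ` x ` J = (\<lambda>j. relabel x y n (x j)) ` J" by (simp add: image_image)
  also have "\<dots> = y ` J" using relabel_apply[OF assms(1)] assms(2) by (intro image_cong) auto
  finally show ?thesis .
qed

lemma cluster_relabelling_same_pattern:
  fixes x y :: "nat \<Rightarrow> real^'d::finite"
  assumes xB: "\<forall>i<n. x i \<in> B" and yB: "\<forall>i<n. y i \<in> B"
    and same_eq: "\<forall>i<n. \<forall>j<n. x i = x j \<longleftrightarrow> y i = y j"
    and same_link: "\<forall>i<n. \<forall>j<n. dist (x i) (x j) < 2 * a \<longleftrightarrow> dist (y i) (y j) < 2 * a"
    and same_link_boundary: "\<forall>i<n. \<forall>e\<in>near_boundary a B eta. dist (x i) e < 2 * a \<longleftrightarrow> dist (y i) e < 2 * a"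
  shows "cluster_relabelling a B eta (relabel x y n) (x ` {..<n}) (y ` {..<n})"
proof
  let ?h = "relabel x y n" and ?E = "grey (restr eta (- B))"
  have hx: "?h (x i) = y i" if "i < n" for i by (rule relabel_apply[OF same_eq that])
  have EB: "?E \<inter> B = {}" by (auto simp: grey_def restr_def)
  have xE: "x i \<notin> ?E" and yE: "y i \<notin> ?E" if "i < n" for i
    using xB yB that EB by blast+
  show hE: "?h e = e" if "e \<in> ?E" for e using that xE by (auto simp: relabel_def)
  show "x ` {..<n} \<subseteq> B" "y ` {..<n} \<subseteq> B" using xB yB by auto
  show "?h ` x ` {..<n} = y ` {..<n}" by (rule relabel_image[OF same_eq subset_refl])
  have boundary: "dist (y i) e < 2 * a \<longleftrightarrow> dist (x i) e < 2 * a" if i: "i < n" and e: "e \<in> ?E" for i e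
  proof (cases "e \<in> nbhd a B")
    case True
    then have "e \<in> near_boundary a B eta" using e by (simp add: near_boundary_def)
    then show ?thesis using same_link_boundary[rule_format, OF i] by simp
  next
    case False
    then have "\<not> dist z e < 2 * a" if "z \<in> B" for z using that by (auto simp: nbhd_def dist_commute)
    then show ?thesis using xB[rule_format, OF i] yB[rule_format, OF i] by simp
  qed
  have split: "P" if "u \<in> x ` {..<n} \<union> ?E" "v \<in> x ` {..<n} \<union> ?E"
    and "\<And>i j. i < n \<Longrightarrow> j < n \<Longrightarrow> u = x i \<Longrightarrow> v = x j \<Longrightarrow> P"
    and "\<And>i. i < n \<Longrightarrow> u = x i \<Longrightarrow> v \<in> ?E \<Longrightarrow> P"
    and "\<And>j. j < n \<Longrightarrow> u \<in> ?E \<Longrightarrow> v = x j \<Longrightarrow> P"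
    and "u \<in> ?E \<Longrightarrow> v \<in> ?E \<Longrightarrow> P" for u v P
    using that by blast
  show "dist (?h u) (?h v) < 2 * a \<longleftrightarrow> dist u v < 2 * a"
    if "u \<in> x ` {..<n} \<union> ?E" "v \<in> x ` {..<n} \<union> ?E" for u v
  proof (rule split[OF that])
    fix i j assume "i < n" "j < n" "u = x i" "v = x j"
    then show ?thesis using hx same_link[rule_format, of i j] by simp
  next
    fix i assume "i < n" "u = x i" "v \<in> ?E"
    then show ?thesis using hx hE boundary by simp
  next
    fix j assume "j < n" "u \<in> ?E" "v = x j"
    then show ?thesis using hx hE boundary[of j u] by (simp add: dist_commute)
  qed (simp add: hE)
  show "inj_on ?h (x ` {..<n} \<union> ?E)"
  proof (rule inj_onI)
    fix u v assume uv: "u \<in> x ` {..<n} \<union> ?E" "v \<in> x ` {..<n} \<union> ?E" and eq: "?h u = ?h v"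
    show "u = v"
    proof (rule split[OF uv])
      fix i j assume "i < n" "j < n" "u = x i" "v = x j"
      then show ?thesis using eq hx same_eq[rule_format, of i j] by simp
    next
      fix i assume "i < n" "u = x i" "v \<in> ?E"
      then show ?thesis using eq hx hE yE by force
    next
      fix j assume "j < n" "u \<in> ?E" "v = x j"
      then show ?thesis using eq hx hE yE by force
    qed (use eq hE in simp)
  qed
qed

lemma measurable_membership_pattern:
  assumes "finite J" and sets: "\<And>j. j \<in> J \<Longrightarrow> A j \<in> sets M"
  shows "(\<lambda>x. {j \<in> J. x \<in> A j}) \<in> measurable M (count_space (Pow J))"
proof (subst measurable_count_space_eq2)
  show "finite (Pow J)" using assms(1) by simp
  show "(\<lambda>x. {j \<in> J. x \<in> A j}) \<in> space M \<rightarrow> Pow J \<and>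
      (\<forall>P\<in>Pow J. (\<lambda>x. {j \<in> J. x \<in> A j}) -` {P} \<inter> space M \<in> sets M)"
  proof (intro conjI ballI)
    fix P assume P: "P \<in> Pow J"
    have "Measurable.pred M (\<lambda>x. (x \<in> A j) = (j \<in> P))" if j: "j \<in> J" for j
    proof -
      have "{x \<in> space M. (x \<in> A j) = (j \<in> P)} = (if j \<in> P then A j else space M - A j)"
        using sets.sets_into_space[OF sets[OF j]] by auto
      then show ?thesis unfolding Measurable.pred_def using sets[OF j] by auto
    qed
    then have "Measurable.pred M (\<lambda>x. \<forall>j\<in>J. (x \<in> A j) = (j \<in> P))"
      by (rule pred_intros_finite(3)[OF assms(1)])
    moreover have "(\<lambda>x. {j \<in> J. x \<in> A j}) -` {P} \<inter> space M = {x \<in> space M. \<forall>j\<in>J. (x \<in> A j) = (j \<in> P)}"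
      using P by blast
    ultimately show "(\<lambda>x. {j \<in> J. x \<in> A j}) -` {P} \<inter> space M \<in> sets M" by (simp add: Measurable.pred_def)
  qed auto
qed

lemma borel_measurable_membership_pattern:
  fixes G :: "'a \<Rightarrow> real"
  assumes "finite J" "\<And>j. j \<in> J \<Longrightarrow> A j \<in> sets M"
    and same: "\<And>x y. x \<in> space M \<Longrightarrow> y \<in> space M \<Longrightarrow> (\<forall>j\<in>J. x \<in> A j \<longleftrightarrow> y \<in> A j) \<Longrightarrow> G x = G y"
  shows "G \<in> borel_measurable M"
proof -
  define sg where "sg x = {j \<in> J. x \<in> A j}" for x
  define g where "g P = G (SOME x. x \<in> space M \<and> sg x = P)" for P
  have "G x = g (sg x)" if x: "x \<in> space M" for x
  proof -
    define x' where "x' = (SOME x'. x' \<in> space M \<and> sg x' = sg x)"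
    have x': "x' \<in> space M \<and> sg x' = sg x" unfolding x'_def by (rule someI[where x = x]) (simp add: x)
    then have "\<forall>j\<in>J. x' \<in> A j \<longleftrightarrow> x \<in> A j" by (auto simp: sg_def set_eq_iff)
    then have "G x' = G x" using same[of x' x] x' x by simp
    then show ?thesis by (simp add: g_def x'_def)
  qed
  moreover have "(\<lambda>x. g (sg x)) \<in> borel_measurable M"
    using measurable_compose[OF measurable_membership_pattern[OF assms(1,2)], where g = g and L = borel]
    unfolding sg_def by (simp add: Pi_iff)
  ultimately show ?thesis by (subst measurable_cong) auto
qed

lemma measurable_ident_lebesgue_on:
  "B \<in> sets lebesgue \<Longrightarrow> (\<lambda>x. x) \<in> borel_measurable (lebesgue_on (B :: ('a::euclidean_space) set))"
  by (intro measurable_restrict_space1 measurable_completion) simp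

lemma borel_measurable_component_PiM_lebesgue_on:
  assumes "B \<in> sets lebesgue" "i < n"
  shows "(\<lambda>x. x i) \<in> borel_measurable (Pi\<^sub>M {..<n} (\<lambda>_. lebesgue_on (B :: ('a::euclidean_space) set)))"
proof -
  have "(\<lambda>x. x i) \<in> measurable (Pi\<^sub>M {..<n} (\<lambda>_. lebesgue_on B)) (lebesgue_on B)"
    using measurable_component_singleton[of i "{..<n}" "\<lambda>_. lebesgue_on B"] assms(2) by simp
  from measurable_compose[OF this measurable_ident_lebesgue_on[OF assms(1)]] show ?thesis by simp
qed

lemma space_PiM_lebesgue_onD: "x \<in> space (Pi\<^sub>M {..<n} (\<lambda>_. lebesgue_on B)) \<Longrightarrow> i < n \<Longrightarrow> x i \<in> B"
  by (auto simp: space_PiM PiE_def Pi_def)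

lemma space_PiM_image_subset: "x \<in> space (Pi\<^sub>M {..<n} (\<lambda>_. lebesgue_on B)) \<Longrightarrow> x ` {..<n} \<subseteq> B"
  by (auto simp: space_PiM PiE_def Pi_def)

lemma sum_Pow_image:
  fixes x :: "nat \<Rightarrow> 'a" and n :: nat
  shows "(\<Sum>S\<in>Pow (x ` {..<n}). g S)
    = (\<Sum>I\<in>Pow {..<n}. if \<forall>i\<in>I. \<forall>j<n. x j = x i \<longrightarrow> j \<in> I then g (x ` I) else 0)"
proof -
  let ?Sat = "{I \<in> Pow {..<n}. \<forall>i\<in>I. \<forall>j<n. x j = x i \<longrightarrow> j \<in> I}"
  have saturated: "I = {i \<in> {..<n}. x i \<in> x ` I}" if "I \<in> ?Sat" for I
  proof (intro set_eqI iffI)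
    fix i assume "i \<in> {i \<in> {..<n}. x i \<in> x ` I}"
    then obtain j where "i < n" "j \<in> I" "x i = x j" by auto
    then show "i \<in> I" using that by blast
  qed (use that in auto)
  have "bij_betw (\<lambda>I. x ` I) ?Sat (Pow (x ` {..<n}))"
  proof (rule bij_betwI')
    fix I I' assume I: "I \<in> ?Sat" and I': "I' \<in> ?Sat"
    show "(x ` I = x ` I') = (I = I')"
    proof
      assume eq: "x ` I = x ` I'"
      have "I = {i \<in> {..<n}. x i \<in> x ` I}" by (rule saturated[OF I])
      also have "\<dots> = {i \<in> {..<n}. x i \<in> x ` I'}" by (simp only: eq)
      also have "\<dots> = I'" by (rule saturated[OF I', symmetric])
      finally show "I = I'" .
    qed simp
  next
    fix S assume S: "S \<in> Pow (x ` {..<n})"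
    show "\<exists>I\<in>?Sat. S = x ` I"
      by (rule bexI[of _ "{i \<in> {..<n}. x i \<in> S}"]) (use S in auto)
  qed auto
  then have "(\<Sum>S\<in>Pow (x ` {..<n}). g S) = (\<Sum>I\<in>?Sat. g (x ` I))"
    by (rule sum.reindex_bij_betw[symmetric])
  also have "\<dots> = (\<Sum>I\<in>Pow {..<n}. if \<forall>i\<in>I. \<forall>j<n. x j = x i \<longrightarrow> j \<in> I then g (x ` I) else 0)"
    by (rule sum.inter_filter) simp
  finally show ?thesis .
qed

context
  fixes a :: real and B :: "(real^'d::finite) set" and eta :: "'d ccfg" and n :: nat
  assumes B_sets: "B \<in> sets lebesgue" and finite_near_boundary: "finite (near_boundary a B eta)"
begin

abbreviation "Mn \<equiv> Pi\<^sub>M {..<n} (\<lambda>_. lebesgue_on B)"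

definition pattern_index :: "(nat \<times> nat \<times> bool + nat \<times> (real^'d)) set" where
  "pattern_index = Inl ` ({..<n} \<times> {..<n} \<times> UNIV) \<union> Inr ` ({..<n} \<times> near_boundary a B eta)"

fun pattern_set :: "nat \<times> nat \<times> bool + nat \<times> (real^'d) \<Rightarrow> (nat \<Rightarrow> real^'d) set" where
  "pattern_set (Inl (i, j, True)) = {x \<in> space Mn. dist (x i) (x j) = 0}"
| "pattern_set (Inl (i, j, False)) = {x \<in> space Mn. dist (x i) (x j) < 2 * a}"
| "pattern_set (Inr (i, e)) = {x \<in> space Mn. dist (x i) e < 2 * a}"

lemma finite_pattern_index: "finite pattern_index"
  using finite_near_boundary by (simp add: pattern_index_def)

lemma pattern_set_sets: "k \<in> pattern_index \<Longrightarrow> pattern_set k \<in> sets Mn"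
proof (induction k rule: pattern_set.induct)
  case (1 i j)
  have "(\<lambda>x. dist (x i) (x j)) \<in> borel_measurable Mn"
    using 1 borel_measurable_component_PiM_lebesgue_on[OF B_sets]
    by (intro borel_measurable_dist) (auto simp: pattern_index_def)
  from measurable_sets[OF this, of "{0}"] show ?case by (simp add: vimage_def Int_def conj_commute)
next
  case (2 i j)
  have "(\<lambda>x. dist (x i) (x j)) \<in> borel_measurable Mn"
    using 2 borel_measurable_component_PiM_lebesgue_on[OF B_sets]
    by (intro borel_measurable_dist) (auto simp: pattern_index_def)
  then show ?case by simp
next
  case (3 i e)
  have "(\<lambda>x. dist (x i) e) \<in> borel_measurable Mn"
    using 3 borel_measurable_component_PiM_lebesgue_on[OF B_sets]
    by (intro borel_measurable_dist) (auto simp: pattern_index_def)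
  then show ?case by simp
qed

lemma same_patternD:
  assumes x: "x \<in> space Mn" and y: "y \<in> space Mn"
    and same: "\<forall>k\<in>pattern_index. x \<in> pattern_set k \<longleftrightarrow> y \<in> pattern_set k"
  shows "\<forall>i<n. \<forall>j<n. x i = x j \<longleftrightarrow> y i = y j"
    and "\<forall>i<n. \<forall>j<n. dist (x i) (x j) < 2 * a \<longleftrightarrow> dist (y i) (y j) < 2 * a"
    and "\<forall>i<n. \<forall>e\<in>near_boundary a B eta. dist (x i) e < 2 * a \<longleftrightarrow> dist (y i) e < 2 * a"
proof -
  have "x i = x j \<longleftrightarrow> y i = y j" "dist (x i) (x j) < 2 * a \<longleftrightarrow> dist (y i) (y j) < 2 * a"
    if "i < n" "j < n" for i j
  proof -
    have "Inl (i, j, True) \<in> pattern_index" "Inl (i, j, False) \<in> pattern_index"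
      using that by (auto simp: pattern_index_def)
    then show "x i = x j \<longleftrightarrow> y i = y j" "dist (x i) (x j) < 2 * a \<longleftrightarrow> dist (y i) (y j) < 2 * a"
      using same x y by auto
  qed
  moreover have "dist (x i) e < 2 * a \<longleftrightarrow> dist (y i) e < 2 * a"
    if "i < n" "e \<in> near_boundary a B eta" for i e
  proof -
    have "Inr (i, e) \<in> pattern_index" using that by (auto simp: pattern_index_def)
    then show ?thesis using same x y by auto
  qed
  ultimately show "\<forall>i<n. \<forall>j<n. x i = x j \<longleftrightarrow> y i = y j"
    and "\<forall>i<n. \<forall>j<n. dist (x i) (x j) < 2 * a \<longleftrightarrow> dist (y i) (y j) < 2 * a"
    and "\<forall>i<n. \<forall>e\<in>near_boundary a B eta. dist (x i) e < 2 * a \<longleftrightarrow> dist (y i) e < 2 * a"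
    by blast+
qed

lemma Wt_nuinf_same_pattern:
  assumes x: "x \<in> space Mn" and y: "y \<in> space Mn"
    and same: "\<forall>k\<in>pattern_index. x \<in> pattern_set k \<longleftrightarrow> y \<in> pattern_set k"
  shows "Wt a lp lm t B eta (y ` {..<n}) = Wt a lp lm t B eta (x ` {..<n})"
    and "I \<subseteq> {..<n} \<Longrightarrow> nuinf a lp lm t B eta (y ` {..<n}) (y ` I) = nuinf a lp lm t B eta (x ` {..<n}) (x ` I)"
proof -
  have "\<forall>i<n. x i \<in> B" "\<forall>i<n. y i \<in> B" using x y space_PiM_lebesgue_onD by blast+
  with same_patternD[OF x y same]
  interpret cluster_relabelling a B eta "relabel x y n" "x ` {..<n}" "y ` {..<n}"
    by (intro cluster_relabelling_same_pattern)
  show "Wt a lp lm t B eta (y ` {..<n}) = Wt a lp lm t B eta (x ` {..<n})" by (rule Wt_relabel)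
  show "nuinf a lp lm t B eta (y ` {..<n}) (y ` I) = nuinf a lp lm t B eta (x ` {..<n}) (x ` I)"
    if "I \<subseteq> {..<n}"
    using nuinf_relabel[OF image_mono[OF that]] relabel_image[OF same_patternD(1)[OF x y same] that] by simp
qed

lemma borel_measurable_Wt: "(\<lambda>x. Wt a lp lm t B eta (x ` {..<n})) \<in> borel_measurable Mn"
proof (rule borel_measurable_membership_pattern[OF finite_pattern_index pattern_set_sets])
  fix x y assume "x \<in> space Mn" "y \<in> space Mn"
    "\<forall>k\<in>pattern_index. x \<in> pattern_set k \<longleftrightarrow> y \<in> pattern_set k"
  from Wt_nuinf_same_pattern(1)[OF this]
  show "Wt a lp lm t B eta (x ` {..<n}) = Wt a lp lm t B eta (y ` {..<n})" by simp
qed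

lemma borel_measurable_Wt_nuinf:
  assumes "I \<subseteq> {..<n}"
  shows "(\<lambda>x. if \<forall>i\<in>I. \<forall>j<n. x j = x i \<longrightarrow> j \<in> I
     then Wt a lp lm t B eta (x ` {..<n}) * nuinf a lp lm t B eta (x ` {..<n}) (x ` I) else 0)
     \<in> borel_measurable Mn"
proof (rule borel_measurable_membership_pattern[OF finite_pattern_index pattern_set_sets])
  fix x y assume x: "x \<in> space Mn" and y: "y \<in> space Mn"
    and same: "\<forall>k\<in>pattern_index. x \<in> pattern_set k \<longleftrightarrow> y \<in> pattern_set k"
  have "x j = x i \<longleftrightarrow> y j = y i" if "i < n" "j < n" for i j
    using same_patternD(1)[OF x y same] that by simp
  then have sat: "(\<forall>i\<in>I. \<forall>j<n. x j = x i \<longrightarrow> j \<in> I) \<longleftrightarrow> (\<forall>i\<in>I. \<forall>j<n. y j = y i \<longrightarrow> j \<in> I)"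
    using assms by blast
  show "(if \<forall>i\<in>I. \<forall>j<n. x j = x i \<longrightarrow> j \<in> I
      then Wt a lp lm t B eta (x ` {..<n}) * nuinf a lp lm t B eta (x ` {..<n}) (x ` I) else 0)
    = (if \<forall>i\<in>I. \<forall>j<n. y j = y i \<longrightarrow> j \<in> I
      then Wt a lp lm t B eta (y ` {..<n}) * nuinf a lp lm t B eta (y ` {..<n}) (y ` I) else 0)"
    unfolding sat Wt_nuinf_same_pattern(1)[OF x y same] Wt_nuinf_same_pattern(2)[OF x y same assms]
    by (rule refl)
qed

lemma borel_measurable_cfg_split:
  assumes f: "cfg_measurable f" and I: "I \<subseteq> {..<n}"
  shows "(\<lambda>x. f (x ` I, x ` ({..<n} - I))) \<in> borel_measurable Mn"
proof -
  have "(\<lambda>x. f (x ` {i \<in> {..<n}. i \<in> I}, x ` {i \<in> {..<n}. i \<notin> I}))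
      \<in> borel_measurable (Pi\<^sub>M {..<n} (\<lambda>_. (lborel :: (real^'d) measure)))"
    using f unfolding cfg_measurable_def by (rule allE[of _ n]) (erule allE[of _ "\<lambda>i. i \<in> I"])
  moreover have "(\<lambda>x. x) \<in> measurable Mn (Pi\<^sub>M {..<n} (\<lambda>_. (lborel :: (real^'d) measure)))"
  proof (rule measurable_PiM_single')
    show "(\<lambda>x. x i) \<in> Mn \<rightarrow>\<^sub>M lborel" if "i \<in> {..<n}" for i
      using borel_measurable_component_PiM_lebesgue_on[OF B_sets] that by (simp add: measurable_lborel1)
  qed (auto simp: space_PiM PiE_def Pi_def)
  moreover have "{i \<in> {..<n}. i \<in> I} = I" "{i \<in> {..<n}. i \<notin> I} = {..<n} - I" using I by auto
  ultimately show ?thesis using measurable_comp by (fastforce simp: comp_def)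
qed

lemma finf_mult_Wt_eq:
  "finf a lp lm t B eta f (x ` {..<n}) * Wt a lp lm t B eta (x ` {..<n})
   = (\<Sum>I\<in>Pow {..<n}. f (x ` I, x ` ({..<n} - I)) *
        (if \<forall>i\<in>I. \<forall>j<n. x j = x i \<longrightarrow> j \<in> I
         then Wt a lp lm t B eta (x ` {..<n}) * nuinf a lp lm t B eta (x ` {..<n}) (x ` I) else 0))"
proof -
  have "finf a lp lm t B eta f (x ` {..<n}) * Wt a lp lm t B eta (x ` {..<n})
      = (\<Sum>S\<in>Pow (x ` {..<n}). f (S, x ` {..<n} - S)
          * (Wt a lp lm t B eta (x ` {..<n}) * nuinf a lp lm t B eta (x ` {..<n}) S))"
    unfolding finf_def sum_distrib_right by (simp add: mult_ac)
  also have "\<dots> = (\<Sum>I\<in>Pow {..<n}. if \<forall>i\<in>I. \<forall>j<n. x j = x i \<longrightarrow> j \<in> I then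
        f (x ` I, x ` {..<n} - x ` I) * (Wt a lp lm t B eta (x ` {..<n}) * nuinf a lp lm t B eta (x ` {..<n}) (x ` I))
        else 0)"
    by (rule sum_Pow_image)
  also have "\<dots> = (\<Sum>I\<in>Pow {..<n}. f (x ` I, x ` ({..<n} - I)) *
        (if \<forall>i\<in>I. \<forall>j<n. x j = x i \<longrightarrow> j \<in> I
         then Wt a lp lm t B eta (x ` {..<n}) * nuinf a lp lm t B eta (x ` {..<n}) (x ` I) else 0))"
  proof (intro sum.cong refl)
    fix I assume "I \<in> Pow {..<n}"
    then have diff: "(\<forall>i\<in>I. \<forall>j<n. x j = x i \<longrightarrow> j \<in> I) \<Longrightarrow> x ` {..<n} - x ` I = x ` ({..<n} - I)"
      by auto
    show "(if \<forall>i\<in>I. \<forall>j<n. x j = x i \<longrightarrow> j \<in> I then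
        f (x ` I, x ` {..<n} - x ` I) * (Wt a lp lm t B eta (x ` {..<n}) * nuinf a lp lm t B eta (x ` {..<n}) (x ` I))
        else 0)
      = f (x ` I, x ` ({..<n} - I)) * (if \<forall>i\<in>I. \<forall>j<n. x j = x i \<longrightarrow> j \<in> I
        then Wt a lp lm t B eta (x ` {..<n}) * nuinf a lp lm t B eta (x ` {..<n}) (x ` I) else 0)"
    proof (cases "\<forall>i\<in>I. \<forall>j<n. x j = x i \<longrightarrow> j \<in> I")
      case True
      then show ?thesis using diff by simp
    next
      case False
      then show ?thesis by (simp only: if_not_P[OF False] if_False mult_zero_right)
    qed
  qed
  finally show ?thesis .
qed

lemma borel_measurable_finf_Wt:
  assumes "cfg_measurable f"
  shows "(\<lambda>x. finf a lp lm t B eta f (x ` {..<n}) * Wt a lp lm t B eta (x ` {..<n})) \<in> borel_measurable Mn"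
  unfolding finf_mult_Wt_eq
  using borel_measurable_cfg_split[OF assms] borel_measurable_Wt_nuinf
  by (intro borel_measurable_sum borel_measurable_times) auto

end

section \<open>Poisson integrals\<close>

text \<open>Measurability on each \<open>n\<close>-point sector together with at most exponential growth in the
  number of points: exactly what makes the Poisson series converge absolutely.\<close>
definition poisson_admissible :: "('d::finite) pt set \<Rightarrow> ('d pt set \<Rightarrow> real) \<Rightarrow> bool" where
  "poisson_admissible S F \<longleftrightarrow> (\<exists>K M. 0 \<le> M \<and> (\<forall>n.
     (\<lambda>x. F (x ` {..<n})) \<in> borel_measurable (Pi\<^sub>M {..<n} (\<lambda>_. lebesgue_on S))
     \<and> (\<forall>x\<in>space (Pi\<^sub>M {..<n} (\<lambda>_. lebesgue_on S)). \<bar>F (x ` {..<n})\<bar> \<le> K * M ^ n)))"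

lemma poisson_admissible_add:
  assumes "poisson_admissible S F" "poisson_admissible S G"
  shows "poisson_admissible S (\<lambda>w. F w + c * G w)"
proof -
  let ?M = "\<lambda>n::nat. Pi\<^sub>M {..<n} (\<lambda>_. lebesgue_on S)"
  obtain K1 M1 where M1: "0 \<le> M1" and F: "\<forall>n. (\<lambda>x. F (x ` {..<n})) \<in> borel_measurable (?M n)
      \<and> (\<forall>x\<in>space (?M n). \<bar>F (x ` {..<n})\<bar> \<le> K1 * M1 ^ n)"
    using assms(1) unfolding poisson_admissible_def by blast
  obtain K2 M2 where M2: "0 \<le> M2" and G: "\<forall>n. (\<lambda>x. G (x ` {..<n})) \<in> borel_measurable (?M n)
      \<and> (\<forall>x\<in>space (?M n). \<bar>G (x ` {..<n})\<bar> \<le> K2 * M2 ^ n)"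
    using assms(2) unfolding poisson_admissible_def by blast
  define M where "M = max 1 (max M1 M2)"
  have le_M: "K * M' ^ n \<le> \<bar>K\<bar> * M ^ n" if "0 \<le> M'" "M' \<le> M" for K M' n
  proof -
    have "K * M' ^ n \<le> \<bar>K\<bar> * M' ^ n" using that by (intro mult_right_mono) auto
    also have "\<dots> \<le> \<bar>K\<bar> * M ^ n" using that by (intro mult_left_mono power_mono) auto
    finally show ?thesis .
  qed
  have "\<bar>F (x ` {..<n}) + c * G (x ` {..<n})\<bar> \<le> (\<bar>K1\<bar> + \<bar>c\<bar> * \<bar>K2\<bar>) * M ^ n"
    if x: "x \<in> space (?M n)" for n x
  proof -
    have "M1 \<le> M" "M2 \<le> M" by (simp_all add: M_def)
    then have "K1 * M1 ^ n \<le> \<bar>K1\<bar> * M ^ n" "K2 * M2 ^ n \<le> \<bar>K2\<bar> * M ^ n"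
      using le_M M1 M2 by blast+
    moreover have "\<bar>F (x ` {..<n})\<bar> \<le> K1 * M1 ^ n" "\<bar>G (x ` {..<n})\<bar> \<le> K2 * M2 ^ n"
      using F G x by blast+
    ultimately have "\<bar>F (x ` {..<n})\<bar> \<le> \<bar>K1\<bar> * M ^ n" "\<bar>G (x ` {..<n})\<bar> \<le> \<bar>K2\<bar> * M ^ n"
      by linarith+
    then have "\<bar>F (x ` {..<n})\<bar> + \<bar>c\<bar> * \<bar>G (x ` {..<n})\<bar> \<le> \<bar>K1\<bar> * M ^ n + \<bar>c\<bar> * (\<bar>K2\<bar> * M ^ n)"
      by (intro add_mono mult_left_mono) auto
    moreover have "\<bar>F (x ` {..<n}) + c * G (x ` {..<n})\<bar> \<le> \<bar>F (x ` {..<n})\<bar> + \<bar>c\<bar> * \<bar>G (x ` {..<n})\<bar>"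
      by (simp add: abs_mult[symmetric] abs_triangle_ineq)
    ultimately show ?thesis by (simp add: algebra_simps)
  qed
  moreover have "(\<lambda>x. F (x ` {..<n}) + c * G (x ` {..<n})) \<in> borel_measurable (?M n)" for n
  proof -
    have "(\<lambda>x. F (x ` {..<n})) \<in> borel_measurable (?M n)" "(\<lambda>x. G (x ` {..<n})) \<in> borel_measurable (?M n)"
      using F G by blast+
    then show ?thesis by (intro borel_measurable_add borel_measurable_times borel_measurable_const)
  qed
  moreover have "0 \<le> M" by (simp add: M_def)
  ultimately show ?thesis unfolding poisson_admissible_def by blast
qed

lemma poisson_admissible_zero: "poisson_admissible S (\<lambda>_. 0)"
  unfolding poisson_admissible_def by (intro exI[of _ 0] exI[of _ 1]) simp

lemma poisson_admissible_scale: "poisson_admissible S G \<Longrightarrow> poisson_admissible S (\<lambda>w. c * G w)"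
  using poisson_admissible_add[OF poisson_admissible_zero, of S G c] by simp

context
  fixes S :: "('d::finite) pt set" and lam :: real
  assumes S_sets: "S \<in> sets lebesgue" and S_bounded: "bounded S" and lam_pos: "0 < lam"
begin

abbreviation MM :: "nat \<Rightarrow> (nat \<Rightarrow> real^'d) measure" where
  "MM n \<equiv> Pi\<^sub>M {..<n} (\<lambda>_. lebesgue_on S)"

lemma finite_measure_lebesgue_on: "finite_measure (lebesgue_on S)"
proof (rule finite_measureI)
  have "S \<in> lmeasurable" using bounded_set_imp_lmeasurable[OF S_bounded S_sets] .
  then show "emeasure (lebesgue_on S) (space (lebesgue_on S)) \<noteq> \<infinity>"
    using S_sets by (simp add: emeasure_restrict_space fmeasurable_def)
qed

lemma integrable_const_PiM: "integrable (MM n) (\<lambda>x. c :: real)"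
  and integral_const_PiM: "(\<integral>x. (c::real) \<partial>MM n) = c * measure lebesgue S ^ n"
proof -
  interpret product_sigma_finite "\<lambda>_. lebesgue_on S"
    using finite_measure_lebesgue_on by (intro product_sigma_finite.intro) (simp add: finite_measure.axioms(1))
  have one: "integrable (lebesgue_on S) (\<lambda>_. 1 :: real)"
    using finite_measure_lebesgue_on by (simp add: finite_measure.integrable_const)
  have "integrable (MM n) (\<lambda>x. \<Prod>i\<in>{..<n}. (\<lambda>_. 1 :: real) (x i))"
    by (rule product_integrable_prod) (use one in auto)
  then have "integrable (MM n) (\<lambda>x. c * 1 :: real)" by (intro integrable_mult_right) simp
  then show "integrable (MM n) (\<lambda>x. c :: real)" by simp
  have "(\<integral>x. (\<Prod>i\<in>{..<n}. (\<lambda>_. 1 :: real) (x i)) \<partial>MM n) = (\<Prod>i\<in>{..<n}. \<integral>y. (1::real) \<partial>lebesgue_on S)"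
    by (rule product_integral_prod) (use one in auto)
  then show "(\<integral>x. (c::real) \<partial>MM n) = c * measure lebesgue S ^ n"
    using S_sets by (simp add: measure_restrict_space)
qed

lemma poisson_admissible_integrable:
  assumes "poisson_admissible S F"
  shows "integrable (MM n) (\<lambda>x. F (x ` {..<n}))"
proof -
  obtain K M where "(\<lambda>x. F (x ` {..<n})) \<in> borel_measurable (MM n)"
    and "\<forall>x\<in>space (MM n). \<bar>F (x ` {..<n})\<bar> \<le> K * M ^ n"
    using assms unfolding poisson_admissible_def by blast
  then show ?thesis
    by (intro Bochner_Integration.integrable_bound[OF integrable_const_PiM[of n "K * M ^ n"]] AE_I2) auto
qed

definition poisson_coeff :: "nat \<Rightarrow> real" where
  "poisson_coeff n = exp (- lam * measure lebesgue S) * lam ^ n / fact n"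

lemma poisson_coeff_pos: "0 < poisson_coeff n"
  using lam_pos by (simp add: poisson_coeff_def)

lemma poisson_int_eq: "poisson_int lam S F = (\<Sum>n. poisson_coeff n * (\<integral>x. F (x ` {..<n}) \<partial>MM n))"
  by (simp add: poisson_int_def poisson_coeff_def)

lemma poisson_admissible_summable:
  assumes "poisson_admissible S F"
  shows "summable (\<lambda>n. poisson_coeff n * (\<integral>x. F (x ` {..<n}) \<partial>MM n))"
proof -
  obtain K M where M: "0 \<le> M" and F: "\<And>n. \<forall>x\<in>space (MM n). \<bar>F (x ` {..<n})\<bar> \<le> K * M ^ n"
    using assms unfolding poisson_admissible_def by blast
  have bound: "\<bar>\<integral>x. F (x ` {..<n}) \<partial>MM n\<bar> \<le> K * M ^ n * measure lebesgue S ^ n" for n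
  proof -
    have "\<bar>\<integral>x. F (x ` {..<n}) \<partial>MM n\<bar> \<le> (\<integral>x. \<bar>F (x ` {..<n})\<bar> \<partial>MM n)"
      using integral_norm_bound[of "MM n" "\<lambda>x. F (x ` {..<n})"] by simp
    also have "\<dots> \<le> (\<integral>x. K * M ^ n \<partial>MM n)"
      using poisson_admissible_integrable[OF assms] F integrable_const_PiM
      by (intro integral_mono) auto
    also have "\<dots> = K * M ^ n * measure lebesgue S ^ n" by (rule integral_const_PiM)
    finally show ?thesis .
  qed
  define q where "q = lam * M * measure lebesgue S"
  show ?thesis
  proof (rule summable_comparison_test')
    show "summable (\<lambda>n. exp (- lam * measure lebesgue S) * K * (inverse (fact n) * q ^ n))"
      by (intro summable_mult summable_exp)
    fix n :: nat
    have "norm (poisson_coeff n * (\<integral>x. F (x ` {..<n}) \<partial>MM n))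
        \<le> poisson_coeff n * (K * M ^ n * measure lebesgue S ^ n)"
      using poisson_coeff_pos[of n] bound[of n] by (simp add: abs_mult)
    also have "\<dots> = exp (- lam * measure lebesgue S) * K * (inverse (fact n) * q ^ n)"
      by (simp add: poisson_coeff_def q_def power_mult_distrib field_simps)
    finally show "norm (poisson_coeff n * (\<integral>x. F (x ` {..<n}) \<partial>MM n))
        \<le> exp (- lam * measure lebesgue S) * K * (inverse (fact n) * q ^ n)" .
  qed
qed

lemma poisson_int_add:
  assumes F: "poisson_admissible S F" and G: "poisson_admissible S G"
  shows "poisson_int lam S (\<lambda>w. F w + c * G w) = poisson_int lam S F + c * poisson_int lam S G"
proof -
  have "(\<integral>x. F (x ` {..<n}) + c * G (x ` {..<n}) \<partial>MM n)
      = (\<integral>x. F (x ` {..<n}) \<partial>MM n) + c * (\<integral>x. G (x ` {..<n}) \<partial>MM n)" for n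
    using poisson_admissible_integrable[OF F, of n] poisson_admissible_integrable[OF G, of n] by simp
  then have "poisson_int lam S (\<lambda>w. F w + c * G w)
      = (\<Sum>n. poisson_coeff n * (\<integral>x. F (x ` {..<n}) \<partial>MM n) + c * (poisson_coeff n * (\<integral>x. G (x ` {..<n}) \<partial>MM n)))"
    unfolding poisson_int_eq by (simp add: algebra_simps)
  also have "\<dots> = poisson_int lam S F + c * poisson_int lam S G"
    unfolding poisson_int_eq
    using poisson_admissible_summable[OF F] summable_mult[OF poisson_admissible_summable[OF G]]
    by (simp add: suminf_add[symmetric] suminf_mult poisson_admissible_summable[OF G])
  finally show ?thesis .
qed

lemma poisson_int_scale: "poisson_admissible S G \<Longrightarrow> poisson_int lam S (\<lambda>w. c * G w) = c * poisson_int lam S G"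
  using poisson_int_add[OF poisson_admissible_zero, of G c] by (simp add: poisson_int_def)

lemma poisson_int_mono:
  assumes F: "poisson_admissible S F" and G: "poisson_admissible S G"
    and le: "\<And>w. finite w \<Longrightarrow> w \<subseteq> S \<Longrightarrow> F w \<le> G w"
  shows "poisson_int lam S F \<le> poisson_int lam S G"
  unfolding poisson_int_eq
proof (rule suminf_le[OF _ poisson_admissible_summable[OF F] poisson_admissible_summable[OF G]])
  fix n
  have "(\<integral>x. F (x ` {..<n}) \<partial>MM n) \<le> (\<integral>x. G (x ` {..<n}) \<partial>MM n)"
    using poisson_admissible_integrable[OF F] poisson_admissible_integrable[OF G]
      le[OF finite_imageI[OF finite_lessThan] space_PiM_image_subset]
    by (intro integral_mono) auto
  then show "poisson_coeff n * (\<integral>x. F (x ` {..<n}) \<partial>MM n) \<le> poisson_coeff n * (\<integral>x. G (x ` {..<n}) \<partial>MM n)"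
    using poisson_coeff_pos[of n] by (simp add: mult_left_mono)
qed

lemma poisson_int_le_scale:
  assumes "poisson_admissible S F" "poisson_admissible S G"
    and "\<And>w. finite w \<Longrightarrow> w \<subseteq> S \<Longrightarrow> F w \<le> c * G w"
  shows "poisson_int lam S F \<le> c * poisson_int lam S G"
  using poisson_int_mono[OF assms(1) poisson_admissible_scale[OF assms(2)] assms(3)]
    poisson_int_scale[OF assms(2)] by simp

lemma poisson_int_nonneg:
  assumes "poisson_admissible S F" "\<And>w. finite w \<Longrightarrow> w \<subseteq> S \<Longrightarrow> 0 \<le> F w"
  shows "0 \<le> poisson_int lam S F"
  using poisson_int_mono[OF poisson_admissible_zero assms] by (simp add: poisson_int_def)

lemma poisson_int_pos:
  assumes F: "poisson_admissible S F" and pos: "\<And>w. finite w \<Longrightarrow> w \<subseteq> S \<Longrightarrow> 0 < F w"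
  shows "0 < poisson_int lam S F"
proof -
  have nonneg: "0 \<le> poisson_coeff n * (\<integral>x. F (x ` {..<n}) \<partial>MM n)" for n
    using poisson_coeff_pos[of n] pos[OF finite_imageI[OF finite_lessThan] space_PiM_image_subset]
    by (intro mult_nonneg_nonneg Bochner_Integration.integral_nonneg less_imp_le) auto
  have "(\<integral>x. F (x ` {..<0}) \<partial>MM 0) = F {}"
    by (simp add: PiM_empty lebesgue_integral_count_space_finite)
  then have "0 < (\<Sum>n<1. poisson_coeff n * (\<integral>x. F (x ` {..<n}) \<partial>MM n))"
    using poisson_coeff_pos[of 0] pos[of "{}"] by simp
  also have "\<dots> \<le> (\<Sum>n. poisson_coeff n * (\<integral>x. F (x ` {..<n}) \<partial>MM n))"
    by (rule sum_le_suminf[OF poisson_admissible_summable[OF F]]) (use nonneg in auto)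
  finally show ?thesis unfolding poisson_int_eq .
qed

end

section \<open>Oscillation of the specification\<close>

lemma ratio_oscillation_le:
  fixes a1 a2 I1 I2 c m :: real
  assumes "0 < I1" "0 < I2" "1 \<le> c" "0 \<le> a1" "0 \<le> a2" "a1 \<le> c * a2" "a2 \<le> c * a1"
    "I1 \<le> c * I2" "I2 \<le> c * I1" "a1 \<le> 2 * m * I1" "a2 \<le> 2 * m * I2"
  shows "\<bar>(a1 - m * I1) / I1 - (a2 - m * I2) / I2\<bar> \<le> 2 * m * (c\<^sup>2 - 1)"
proof -
  have ratio_le: "a / I \<le> c\<^sup>2 * (a' / I')"
    if "0 < I" "0 < I'" "0 \<le> a'" "a \<le> c * a'" "I' \<le> c * I" for a I a' I'
  proof -
    have "a / I \<le> c * a' / I" using that by (simp add: divide_right_mono)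
    also have "\<dots> \<le> c * a' / (I' / c)"
      using that assms(3) by (intro divide_left_mono mult_nonneg_nonneg) (auto simp: field_simps)
    also have "\<dots> = c\<^sup>2 * (a' / I')" using assms(3) by (simp add: field_simps power2_eq_square)
    finally show ?thesis .
  qed
  have osc: "a / I - a' / I' \<le> 2 * m * (c\<^sup>2 - 1)"
    if "a / I \<le> c\<^sup>2 * (a' / I')" "a' / I' \<le> 2 * m" for a I a' I'
  proof -
    have "0 \<le> c\<^sup>2 - 1" using assms(3) by (simp add: one_le_power)
    then have "(c\<^sup>2 - 1) * (a' / I') \<le> (c\<^sup>2 - 1) * (2 * m)" using that(2) by (intro mult_left_mono)
    then show ?thesis using that(1) by (simp add: algebra_simps)
  qed
  have "a1 / I1 - a2 / I2 \<le> 2 * m * (c\<^sup>2 - 1)" "a2 / I2 - a1 / I1 \<le> 2 * m * (c\<^sup>2 - 1)"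
    using osc ratio_le assms by (simp_all add: divide_le_eq)
  moreover have "(a1 - m * I1) / I1 - (a2 - m * I2) / I2 = a1 / I1 - a2 / I2"
    using assms(1,2) by (simp add: field_simps)
  ultimately show ?thesis by (simp add: abs_le_iff)
qed

lemma one_plus_power_minus_one_le: "0 \<le> (x::real) \<Longrightarrow> (1 + x) ^ N - 1 \<le> real N * x * (1 + x) ^ N"
proof (induction N)
  case (Suc N)
  have "1 \<le> (1 + x) ^ Suc N" by (rule one_le_power) (use Suc.prems in simp)
  then have "x \<le> x * (1 + x) ^ Suc N" using Suc.prems mult_left_mono[of 1 _ x] by simp
  moreover have "(1 + x) * ((1 + x) ^ N - 1) \<le> (1 + x) * (real N * x * (1 + x) ^ N)"
    using Suc by (intro mult_left_mono) auto
  ultimately show ?case by (simp add: algebra_simps)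
qed simp

locale boundary_oscillation = asymmetric_regime +
  fixes a :: real and x0 :: "real^'d::finite" and r :: real and L :: "(real^'d) set"
    and w :: "'d ccfg" and f :: "'d ccfg \<Rightarrow> real"
  assumes a_pos: "0 < a" and r_pos: "0 < r" and ball_subset_L: "ball x0 r \<subseteq> L"
    and w_ccfg: "w \<in> ccfgs" and f_Fb: "f \<in> Fb (ball x0 r)"
begin

definition "B = ball x0 r"
definition "eta w' = cat (restr w (L - B)) (restr w' (- L))"
definition "den w' om = Wt a lp lm t B (eta w') om"
definition "num w' om = finf a lp lm t B (eta w') f om * Wt a lp lm t B (eta w') om"
definition "m = supnorm f"
definition "c = (1 + decay_factor a B L) ^ cluster_count_bound a r DIM(real^'d)"

lemma decoupling: "w' \<in> ccfgs \<Longrightarrow> finite om \<Longrightarrow> om \<subseteq> B \<Longrightarrow> boundary_decoupling lp lm t a x0 r L w w' om"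
  using a_pos r_pos ball_subset_L w_ccfg by unfold_locales (auto simp: B_def)

lemma decoupling_B: "boundary_decoupling.B x0 r = B"
proof -
  interpret D: boundary_decoupling lp lm t a x0 r L w w "{}" by (rule decoupling[OF w_ccfg]) auto
  show ?thesis by (simp add: D.B_def B_def)
qed

lemma decoupling_eta: "w' \<in> ccfgs \<Longrightarrow> boundary_decoupling.eta x0 r L w w' = eta w'"
proof -
  assume "w' \<in> ccfgs"
  then interpret D: boundary_decoupling lp lm t a x0 r L w w' "{}" by (rule decoupling) auto
  show ?thesis by (simp add: D.eta_def eta_def decoupling_B)
qed

lemma decoupling_E: "w' \<in> ccfgs \<Longrightarrow> boundary_decoupling.E x0 r L w w' = grey (restr (eta w') (- B))"
proof -
  assume w': "w' \<in> ccfgs"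
  then interpret D: boundary_decoupling lp lm t a x0 r L w w' "{}" by (rule decoupling) auto
  show ?thesis by (simp add: D.E_def decoupling_eta[OF w'] decoupling_B)
qed

lemma c_ge_1: "1 \<le> c"
  by (simp add: c_def decay_factor_def one_le_power)

lemma f_bounded: "u \<in> ccfgs \<Longrightarrow> \<bar>f u\<bar> \<le> m"
proof -
  assume u: "u \<in> ccfgs"
  have "bounded (f ` ccfgs)" using f_Fb by (simp add: Fb_def)
  then have "bdd_above ((\<lambda>u. \<bar>f u\<bar>) ` ccfgs)"
    by (auto simp: bounded_real intro: bdd_aboveI2)
  then show ?thesis unfolding m_def supnorm_def by (rule cSUP_upper[OF u])
qed

lemma split_in_ccfgs: "finite om \<Longrightarrow> S \<subseteq> om \<Longrightarrow> (S, om - S) \<in> ccfgs"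
  by (auto simp: ccfgs_def locfin_def grey_def intro: finite_subset)

lemma m_nonneg: "0 \<le> m"
  using f_bounded[OF split_in_ccfgs[of "{}" "{}"]] by simp

lemma f_split_bounded: "finite om \<Longrightarrow> S \<subseteq> om \<Longrightarrow> \<bar>f (S, om - S)\<bar> \<le> m"
  using f_bounded split_in_ccfgs by blast

context
  fixes w' :: "'d ccfg" and om :: "(real^'d) set"
  assumes w': "w' \<in> ccfgs" and om: "finite om" "om \<subseteq> B"
begin

interpretation D: boundary_decoupling lp lm t a x0 r L w w' om
  by (rule decoupling[OF w' om])

lemmas Wt_mult_nuinf_eq = D.Wt_mult_nuinf_eq[unfolded decoupling_B decoupling_eta[OF w']]

lemma den_eq_sum: "den w' om = (\<Sum>S\<in>Pow om. \<Prod>C\<in>D.Cs. cluster_weight lp lm t B (eta w') S C)"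
proof -
  have "(\<Sum>S\<in>Pow om. \<Prod>C\<in>D.Cs. cluster_weight lp lm t B (eta w') S C)
      = Wt a lp lm t B (eta w') om * (\<Sum>S\<in>Pow om. nuinf a lp lm t B (eta w') om S)"
    unfolding Wt_mult_nuinf_eq[symmetric] sum_distrib_left ..
  then show ?thesis
    using D.sum_nuinf_eq_1 by (simp add: den_def decoupling_B decoupling_eta[OF w'])
qed

lemma num_eq_sum:
  "num w' om = (\<Sum>S\<in>Pow om. f (S, om - S) * (\<Prod>C\<in>D.Cs. cluster_weight lp lm t B (eta w') S C))"
  unfolding num_def finf_def sum_distrib_right Wt_mult_nuinf_eq[symmetric] by (simp add: mult_ac)

lemma den_pos: "0 < den w' om"
  using D.Wt_pos by (simp add: den_def decoupling_B decoupling_eta[OF w'])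

lemma den_le: "den w' om \<le> 2 ^ card (grey (restr (eta w') (- B)) \<inter> nbhd a B) * (2 * alpha) ^ card om"
  using D.Wt_le by (simp add: den_def decoupling_B decoupling_E[OF w'] decoupling_eta[OF w'])

lemma num_shift_bounds: "0 \<le> num w' om + m * den w' om \<and> num w' om + m * den w' om \<le> 2 * m * den w' om"
proof -
  have "\<bar>num w' om\<bar> \<le> (\<Sum>S\<in>Pow om. m * (\<Prod>C\<in>D.Cs. cluster_weight lp lm t B (eta w') S C))"
    unfolding num_eq_sum using f_split_bounded[OF om(1)]
    by (intro order_trans[OF sum_abs] sum_mono)
      (auto simp: abs_mult prod_nonneg cluster_weight_nonneg intro: mult_right_mono)
  then have "\<bar>num w' om\<bar> \<le> m * den w' om" by (simp add: den_eq_sum sum_distrib_left)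
  then show ?thesis by (simp add: abs_le_iff)
qed

text \<open>\<open>Xs\<close> and \<open>Ys\<close> do not depend on \<open>w'\<close>.\<close>
lemma num_den_ref_bounds:
  defines "Xs \<equiv> \<Sum>S\<in>Pow om. (f (S, om - S) + m) * boundary_decoupling.ref_weight lp lm t a x0 r L w om S"
    and "Ys \<equiv> \<Sum>S\<in>Pow om. boundary_decoupling.ref_weight lp lm t a x0 r L w om S"
  shows "Xs \<le> num w' om + m * den w' om \<and> num w' om + m * den w' om \<le> c * Xs
    \<and> Ys \<le> den w' om \<and> den w' om \<le> c * Ys"
proof -
  let ?U = "\<lambda>S. \<Prod>C\<in>D.Cs. cluster_weight lp lm t B (eta w') S C"
  have U: "D.ref_weight S \<le> ?U S \<and> ?U S \<le> c * D.ref_weight S" for S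
    using D.prod_cluster_weight_bounds[of S] by (simp add: c_def decoupling_B decoupling_eta[OF w'])
  have f_shift: "0 \<le> f (S, om - S) + m" if "S \<in> Pow om" for S
    using f_split_bounded[OF om(1), of S] that by auto
  have "num w' om + m * den w' om = (\<Sum>S\<in>Pow om. (f (S, om - S) + m) * ?U S)"
    unfolding num_eq_sum den_eq_sum sum_distrib_left sum.distrib[symmetric] by (simp add: distrib_right)
  moreover have "Xs \<le> (\<Sum>S\<in>Pow om. (f (S, om - S) + m) * ?U S)"
    unfolding Xs_def using U f_shift by (intro sum_mono mult_left_mono) auto
  moreover have "(\<Sum>S\<in>Pow om. (f (S, om - S) + m) * ?U S) \<le> c * Xs"
    unfolding Xs_def sum_distrib_left
  proof (rule sum_mono)
    fix S assume "S \<in> Pow om"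
    then have "(f (S, om - S) + m) * ?U S \<le> (f (S, om - S) + m) * (c * D.ref_weight S)"
      using U f_shift by (intro mult_left_mono) auto
    then show "(f (S, om - S) + m) * ?U S \<le> c * ((f (S, om - S) + m) * D.ref_weight S)"
      by (simp add: mult.left_commute)
  qed
  moreover have "Ys \<le> den w' om" "den w' om \<le> c * Ys"
    unfolding Ys_def den_eq_sum sum_distrib_left using U by (auto intro: sum_mono)
  ultimately show ?thesis by simp
qed

end

lemma finite_near_boundary: "w' \<in> ccfgs \<Longrightarrow> finite (near_boundary a B (eta w'))"
proof -
  assume w': "w' \<in> ccfgs"
  interpret D: boundary_decoupling lp lm t a x0 r L w w' "{}" by (rule decoupling[OF w']) auto
  show ?thesis
    using D.finite_V_nbhd by (rule finite_subset[rotated])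
      (auto simp: near_boundary_def D.V_def decoupling_E[OF w'] decoupling_B)
qed

lemma poisson_admissible_den: "w' \<in> ccfgs \<Longrightarrow> poisson_admissible B (den w')"
proof -
  assume w': "w' \<in> ccfgs"
  define K where "K = (2::real) ^ card (grey (restr (eta w') (- B)) \<inter> nbhd a B)"
  have "\<bar>den w' (x ` {..<n})\<bar> \<le> K * (2 * alpha) ^ n"
    if "x \<in> space (Pi\<^sub>M {..<n} (\<lambda>_. lebesgue_on B))" for n :: nat and x
  proof -
    have om: "finite (x ` {..<n})" "x ` {..<n} \<subseteq> B" using space_PiM_image_subset[OF that] by auto
    have "\<bar>den w' (x ` {..<n})\<bar> \<le> K * (2 * alpha) ^ card (x ` {..<n})"
      using den_pos[OF w' om] den_le[OF w' om] by (simp add: K_def)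
    also have "\<dots> \<le> K * (2 * alpha) ^ n"
      using alpha_gt_1 card_image_le[of "{..<n}" x] by (intro mult_left_mono power_increasing) (auto simp: K_def)
    finally show ?thesis .
  qed
  moreover have "(\<lambda>x. den w' (x ` {..<n})) \<in> borel_measurable (Pi\<^sub>M {..<n} (\<lambda>_. lebesgue_on B))" for n :: nat
    unfolding den_def using borel_measurable_Wt[OF _ finite_near_boundary[OF w']] by (simp add: B_def)
  moreover have "0 \<le> 2 * alpha" using alpha_gt_1 by simp
  ultimately show ?thesis unfolding poisson_admissible_def by blast
qed

lemma poisson_admissible_num: "w' \<in> ccfgs \<Longrightarrow> poisson_admissible B (num w')"
proof -
  assume w': "w' \<in> ccfgs"
  obtain K M where M: "0 \<le> M" and den: "\<forall>n. (\<lambda>x. den w' (x ` {..<n})) \<in> borel_measurable (Pi\<^sub>M {..<n} (\<lambda>_. lebesgue_on B))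
      \<and> (\<forall>x\<in>space (Pi\<^sub>M {..<n} (\<lambda>_. lebesgue_on B)). \<bar>den w' (x ` {..<n})\<bar> \<le> K * M ^ n)"
    using poisson_admissible_den[OF w'] unfolding poisson_admissible_def by blast
  have "\<bar>num w' (x ` {..<n})\<bar> \<le> (m * K) * M ^ n"
    if x: "x \<in> space (Pi\<^sub>M {..<n} (\<lambda>_. lebesgue_on B))" for n :: nat and x
  proof -
    have om: "finite (x ` {..<n})" "x ` {..<n} \<subseteq> B" using space_PiM_image_subset[OF x] by auto
    have "\<bar>num w' (x ` {..<n})\<bar> \<le> m * den w' (x ` {..<n})"
      using num_shift_bounds[OF w' om] by (simp add: abs_le_iff)
    also have "\<dots> \<le> m * (K * M ^ n)"
    proof -
      have "\<bar>den w' (x ` {..<n})\<bar> \<le> K * M ^ n" using den x by blast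
      then show ?thesis using m_nonneg by (intro mult_left_mono) auto
    qed
    finally show ?thesis by (simp add: mult.assoc)
  qed
  moreover have "(\<lambda>x. num w' (x ` {..<n})) \<in> borel_measurable (Pi\<^sub>M {..<n} (\<lambda>_. lebesgue_on B))" for n :: nat
    unfolding num_def using borel_measurable_finf_Wt[OF _ finite_near_boundary[OF w']] f_Fb
    by (simp add: B_def Fb_def)
  ultimately show ?thesis using M unfolding poisson_admissible_def by blast
qed

lemma poisson_admissible_num_shift: "w' \<in> ccfgs \<Longrightarrow> poisson_admissible B (\<lambda>om. num w' om + m * den w' om)"
  by (intro poisson_admissible_add poisson_admissible_num poisson_admissible_den)

lemma B_sets: "B \<in> sets lebesgue" and B_bounded: "bounded B"
  by (simp_all add: B_def)

lemma gamma_inf_eq: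
  "w' \<in> ccfgs \<Longrightarrow> gamma_inf a lp lm t B f (eta w')
    = (poisson_int lm B (\<lambda>om. num w' om + m * den w' om) - m * poisson_int lm B (den w')) / poisson_int lm B (den w')"
  using poisson_int_add[OF B_sets B_bounded lm_pos poisson_admissible_num poisson_admissible_den]
  by (simp add: gamma_inf_def num_def[abs_def] den_def[abs_def])

lemma poisson_int_comparable:
  assumes "w1 \<in> ccfgs" "w2 \<in> ccfgs"
  shows "poisson_int lm B (\<lambda>om. num w1 om + m * den w1 om) \<le> c * poisson_int lm B (\<lambda>om. num w2 om + m * den w2 om)"
    and "poisson_int lm B (den w1) \<le> c * poisson_int lm B (den w2)"
proof -
  have "num w1 om + m * den w1 om \<le> c * (num w2 om + m * den w2 om)" "den w1 om \<le> c * den w2 om"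
    if "finite om" "om \<subseteq> B" for om
  proof -
    have trans: "x \<le> c * z" if "x \<le> c * y" "y \<le> z" for x y z
    proof -
      have "c * y \<le> c * z" using that(2) c_ge_1 by (intro mult_left_mono) auto
      then show ?thesis using that(1) by linarith
    qed
    show "num w1 om + m * den w1 om \<le> c * (num w2 om + m * den w2 om)" "den w1 om \<le> c * den w2 om"
      using num_den_ref_bounds[OF assms(1) that] num_den_ref_bounds[OF assms(2) that]
      by (blast intro: trans)+
  qed
  then show "poisson_int lm B (\<lambda>om. num w1 om + m * den w1 om) \<le> c * poisson_int lm B (\<lambda>om. num w2 om + m * den w2 om)"
    and "poisson_int lm B (den w1) \<le> c * poisson_int lm B (den w2)"
    using assms by (auto intro!: poisson_int_le_scale[OF B_sets B_bounded lm_pos]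
        poisson_admissible_num_shift poisson_admissible_den)
qed

lemma gamma_inf_oscillation_le:
  assumes "w1 \<in> ccfgs" "w2 \<in> ccfgs"
  shows "\<bar>gamma_inf a lp lm t B f (eta w1) - gamma_inf a lp lm t B f (eta w2)\<bar> \<le> 2 * m * (c\<^sup>2 - 1)"
proof -
  have pos: "0 < poisson_int lm B (den w')" if "w' \<in> ccfgs" for w'
    using den_pos[OF that] by (intro poisson_int_pos[OF B_sets B_bounded lm_pos poisson_admissible_den[OF that]])
  have range: "0 \<le> poisson_int lm B (\<lambda>om. num w' om + m * den w' om)"
    "poisson_int lm B (\<lambda>om. num w' om + m * den w' om) \<le> 2 * m * poisson_int lm B (den w')"
    if "w' \<in> ccfgs" for w'
    using num_shift_bounds[OF that] that
    by (auto intro!: poisson_int_nonneg[OF B_sets B_bounded lm_pos] poisson_int_le_scale[OF B_sets B_bounded lm_pos]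
        poisson_admissible_num_shift poisson_admissible_den)
  show ?thesis
    unfolding gamma_inf_eq[OF assms(1)] gamma_inf_eq[OF assms(2)]
    using pos range poisson_int_comparable assms c_ge_1 by (intro ratio_oscillation_le) auto
qed

end

context asymmetric_regime
begin

definition oscillation_constant :: "real \<Rightarrow> real \<Rightarrow> nat \<Rightarrow> real" where
  "oscillation_constant a r n = 4 * real (cluster_count_bound a r n) * exp (3 * g_minus)
     * (1 + exp (3 * g_minus)) ^ (2 * cluster_count_bound a r n)"

end

context boundary_oscillation
begin

lemma gamma_inf_oscillation_exp_bound:
  assumes "w1 \<in> ccfgs" "w2 \<in> ccfgs"
  shows "\<bar>gamma_inf a lp lm t B f (eta w1) - gamma_inf a lp lm t B f (eta w2)\<bar>
    \<le> oscillation_constant a r DIM(real^'d) * m * exp (- g_minus * setdist B (- L) / (2 * a))"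
proof -
  define P where "P = cluster_count_bound a r DIM(real^'d)"
  define e where "e = exp (3 * g_minus)"
  define \<epsilon> where "\<epsilon> = exp (- g_minus * setdist B (- L) / (2 * a))"
  have \<epsilon>: "0 \<le> \<epsilon>" "\<epsilon> \<le> 1" using g_minus_pos a_pos by (auto simp: \<epsilon>_def setdist_pos_le)
  have k: "decay_factor a B L = e * \<epsilon>" by (simp add: decay_factor_def e_def \<epsilon>_def exp_diff exp_minus field_simps)
  have e: "0 \<le> e" by (simp add: e_def)
  have "c\<^sup>2 - 1 = (1 + e * \<epsilon>) ^ (2 * P) - 1" by (simp add: c_def k P_def power_mult[symmetric] mult.commute)
  also have "\<dots> \<le> real (2 * P) * (e * \<epsilon>) * (1 + e * \<epsilon>) ^ (2 * P)"
    using e \<epsilon> by (intro one_plus_power_minus_one_le) simp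
  also have "\<dots> \<le> real (2 * P) * (e * \<epsilon>) * (1 + e) ^ (2 * P)"
    using e \<epsilon> mult_left_le[of \<epsilon> e] by (intro mult_left_mono power_mono) auto
  finally have "2 * m * (c\<^sup>2 - 1) \<le> 2 * m * (real (2 * P) * (e * \<epsilon>) * (1 + e) ^ (2 * P))"
    using m_nonneg by (intro mult_left_mono) auto
  also have "\<dots> = oscillation_constant a r DIM(real^'d) * m * \<epsilon>"
    by (simp add: oscillation_constant_def P_def e_def)
  finally have "2 * m * (c\<^sup>2 - 1) \<le> oscillation_constant a r DIM(real^'d) * m * \<epsilon>" .
  then show ?thesis unfolding \<epsilon>_def[symmetric] using gamma_inf_oscillation_le[OF assms] by linarith
qed

end

context asymmetric_regime
begin

lemma gamma_inf_oscillation: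
  fixes x :: "real^'d::finite"
  assumes "0 < a" "0 < r" "ball x r \<subseteq> L" "w \<in> ccfgs" "w1 \<in> ccfgs" "w2 \<in> ccfgs" "f \<in> Fb (ball x r)"
  shows "\<bar>gamma_inf a lp lm t (ball x r) f (cat (restr w (L - ball x r)) (restr w1 (- L)))
      - gamma_inf a lp lm t (ball x r) f (cat (restr w (L - ball x r)) (restr w2 (- L)))\<bar>
    \<le> oscillation_constant a r DIM(real^'d) * supnorm f * exp (- g_minus * setdist (ball x r) (- L) / (2 * a))"
proof -
  interpret boundary_oscillation lp lm t a x r L w f
    using assms by unfold_locales auto
  show ?thesis
    using gamma_inf_oscillation_exp_bound assms(5,6) by (simp add: B_def eta_def m_def)
qed

end

theorem proposition4p5:
  fixes a lp lm :: real and t :: ereal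
  assumes "CARD('d::finite) \<ge> 2" and "a > 0" and "lp > lm" and "lm > 0"
    and "ereal (tG lp lm) < t"
  shows "gfun lp lm t (-1) > 0 \<and>
    (\<forall>r. 0 < r \<longrightarrow> (\<exists>A::real. \<forall>(x :: real^'d) L w f w1 w2.
        L \<in> sets lebesgue \<longrightarrow> bounded L \<longrightarrow> ball x r \<subseteq> L \<longrightarrow>
        w \<in> ccfgs \<longrightarrow> w1 \<in> ccfgs \<longrightarrow> w2 \<in> ccfgs \<longrightarrow> f \<in> Fb (ball x r) \<longrightarrow>
        \<bar>gamma_inf a lp lm t (ball x r) f (cat (restr w (L - ball x r)) (restr w1 (- L)))
         - gamma_inf a lp lm t (ball x r) f (cat (restr w (L - ball x r)) (restr w2 (- L)))\<bar>
        \<le> A * supnorm f * exp (- gfun lp lm t (-1) * setdist (ball x r) (- L) / (2 * a))))"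
proof -
  interpret asymmetric_regime lp lm t
    using assms by unfold_locales auto
  show ?thesis
    unfolding g_minus_def[symmetric]
    by (intro conjI g_minus_pos allI impI exI) (rule gamma_inf_oscillation[OF \<open>0 < a\<close>])
qed

end
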